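(* Let $(V,E)$ be a digraph with $V$ countably infinite, $\mu_1,\mu_2$ probability measures on $V$, and $Q$ a finitely decomposable acyclic flow on $(V,E)$ with $\operatorname{div}Q=\mu_1-\mu_2$. Then there exists a coupling $\rho$ between $\mu_1$ and $\mu_2$ such that, for each ordered pair $x\ne y$, there are countably many directed paths $\gamma^i_{(x,y)}$ in $(V,E)$ from $x$ to $y$ and weights $\rho^i(x,y)\ge0$ with $\sum_i\rho^i(x,y)=\rho(x,y)$ and $Q=\sum_{x\neq y}\sum_i\rho^i(x,y)Q_{\gamma^i_{(x,y)}}$ pointwise, and moreover $\sum_{x\neq y}\rho(x,y)=\frac12\sum_x|\mu_1(x)-\mu_2(x)|$.
   Context: A flow on $(V,E)$ is a map $Q:E\to[0,+\infty)$, with $\operatorname{div}Q(x)=\sum_{y:(x,y)\in E}Q(x,y)-\sum_{y:(y,x)\in E}Q(y,x)$; $Q$ is acyclic if the digraph of edges with $Q>0$ has no directed cycle. For a directed path $\gamma=(x_0,\dots,x_n)$, $Q_\gamma(x,y)=1$ if $(x,y)=(x_i,x_{i+1})$ for some $i$, $0$ otherwise. $Q$ is finitely decomposable if $Q=\sum_nq_nQ_{\gamma_n}$ pointwise for a countable family of finite self-avoiding directed paths $\gamma_n$ and weights $q_n\ge0$ with $\sum_nq_n<\infty$. A coupling is a probability measure on $V\times V$ with marginals $\mu_1,\mu_2$. *)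

theory Defs
  imports "HOL-Analysis.Analysis"
begin

definition dpath :: "'v set \<Rightarrow> ('v \<times> 'v) set \<Rightarrow> 'v list \<Rightarrow> bool" where
  "dpath V E \<gamma> \<longleftrightarrow> \<gamma> \<noteq> [] \<and> set \<gamma> \<subseteq> V \<and>
     (\<forall>i. Suc i < length \<gamma> \<longrightarrow> (\<gamma> ! i, \<gamma> ! Suc i) \<in> E)"

definition sa_dpath :: "'v set \<Rightarrow> ('v \<times> 'v) set \<Rightarrow> 'v list \<Rightarrow> bool" where
  "sa_dpath V E \<gamma> \<longleftrightarrow> dpath V E \<gamma> \<and> distinct \<gamma>"

definition path_flow :: "'v list \<Rightarrow> 'v \<times> 'v \<Rightarrow> real" where
  "path_flow \<gamma> e = (if \<exists>i. Suc i < length \<gamma> \<and> e = (\<gamma> ! i, \<gamma> ! Suc i) then 1 else 0)"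

definition is_flow :: "('v \<times> 'v) set \<Rightarrow> ('v \<times> 'v \<Rightarrow> real) \<Rightarrow> bool" where
  "is_flow E Q \<longleftrightarrow> (\<forall>e\<in>E. Q e \<ge> 0)"

definition divergence :: "('v \<times> 'v) set \<Rightarrow> ('v \<times> 'v \<Rightarrow> real) \<Rightarrow> 'v \<Rightarrow> real" where
  "divergence E Q x = (\<Sum>\<^sub>\<infinity>y\<in>{y. (x,y) \<in> E}. Q (x,y)) - (\<Sum>\<^sub>\<infinity>y\<in>{y. (y,x) \<in> E}. Q (y,x))"

definition acyclic_flow :: "('v \<times> 'v) set \<Rightarrow> ('v \<times> 'v \<Rightarrow> real) \<Rightarrow> bool" where
  "acyclic_flow E Q \<longleftrightarrow> acyclic {e\<in>E. Q e > 0}"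

definition finitely_decomposable :: "'v set \<Rightarrow> ('v \<times> 'v) set \<Rightarrow> ('v \<times> 'v \<Rightarrow> real) \<Rightarrow> bool" where
  "finitely_decomposable V E Q \<longleftrightarrow>
     (\<exists>(\<gamma> :: nat \<Rightarrow> 'v list) (q :: nat \<Rightarrow> real).
        (\<forall>n. q n \<ge> 0 \<and> sa_dpath V E (\<gamma> n)) \<and> summable q \<and>
        (\<forall>e\<in>E. (\<lambda>n. q n * path_flow (\<gamma> n) e) sums Q e))"

definition prob_fun :: "'v set \<Rightarrow> ('v \<Rightarrow> real) \<Rightarrow> bool" where
  "prob_fun V \<mu> \<longleftrightarrow> (\<forall>x\<in>V. \<mu> x \<ge> 0) \<and> (\<mu> has_sum 1) V"

definition coupling :: "'v set \<Rightarrow> ('v \<Rightarrow> real) \<Rightarrow> ('v \<Rightarrow> real) \<Rightarrow> ('v \<times> 'v \<Rightarrow> real) \<Rightarrow> bool" where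
  "coupling V \<mu>1 \<mu>2 \<rho> \<longleftrightarrow> prob_fun (V \<times> V) \<rho> \<and>
     (\<forall>x\<in>V. ((\<lambda>y. \<rho> (x,y)) has_sum \<mu>1 x) V) \<and>
     (\<forall>y\<in>V. ((\<lambda>x. \<rho> (x,y)) has_sum \<mu>2 y) V)"

end

theory Submission
  imports Defs
begin

(*
  Write Q = \<Sum>n q n Q_(\<gamma> n) with self-avoiding paths \<gamma> n, and run a Markov chain whose
  states are these paths: from \<gamma> n, ending at x, it moves to a path \<gamma> m starting at x with
  probability q m / M x, or stops with probability (\<mu>2 - \<mu>1)\<^sup>+ x / M x, where M x is the
  larger of the masses of the paths leaving and entering x; it starts in \<gamma> m with weight
  q m (\<mu>1 - \<mu>2)\<^sup>+ x / M x for x the start of \<gamma> m.  Because div Q = \<mu>1 - \<mu>2 these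
  numbers are stochastic and q solves the balance equation of the chain, and because Q is
  acyclic every trajectory is finite, so q is exactly the expected number of visits.
  Concatenating the paths along a trajectory gives a path from a point of excess to a point
  of deficit; weighting trajectories by their probability decomposes Q into such paths, and
  the resulting transport between excess and deficit, completed by min \<mu>1 \<mu>2 on the
  diagonal, is the coupling.
*)

definition esum :: "('a \<Rightarrow> ennreal) \<Rightarrow> ennreal" where
  "esum f = (\<integral>\<^sup>+ x. f x \<partial>count_space UNIV)"

lemma esum_add: "esum (\<lambda>x. f x + g x) = esum f + esum g"
  unfolding esum_def by (rule nn_integral_add) auto

lemma esum_cmult_left: "esum (\<lambda>x. c * f x) = c * esum f"
  unfolding esum_def by (rule nn_integral_cmult) auto

lemma esum_cmult_right: "esum (\<lambda>x. f x * c) = esum f * c"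
  using esum_cmult_left[of c f] by (simp add: mult.commute)

lemma esum_mono: "(\<And>x. f x \<le> g x) \<Longrightarrow> esum f \<le> esum g"
  unfolding esum_def by (rule nn_integral_mono) auto

lemma esum_cong: "(\<And>x. f x = g x) \<Longrightarrow> esum f = esum g"
  by (metis ext)

lemma esum_pair: "esum (\<lambda>x. esum (\<lambda>y. f (x,y))) = esum f"
  unfolding esum_def by (rule nn_integral_fst_count_space)

lemma esum_pair': "esum (\<lambda>p. f (fst p) (snd p)) = esum (\<lambda>x. esum (\<lambda>y. f x y))"
  using esum_pair[of "\<lambda>p. f (fst p) (snd p)"] by simp

lemma esum_swap: "esum (\<lambda>x. esum (\<lambda>y. f x y)) = esum (\<lambda>y. esum (\<lambda>x. f x y))"
proof -
  have "esum (\<lambda>x. esum (\<lambda>y. f x y)) = esum (\<lambda>p. f (fst p) (snd p))"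
    using esum_pair[of "\<lambda>p. f (fst p) (snd p)"] by simp
  also have "\<dots> = esum (\<lambda>p. f (snd p) (fst p))"
  proof -
    have "(\<integral>\<^sup>+ p. f (snd (prod.swap p)) (fst (prod.swap p)) \<partial>count_space UNIV) = (\<integral>\<^sup>+ p. f (snd p) (fst p) \<partial>count_space UNIV)"
      by (rule nn_integral_bij_count_space) (auto simp: bij_betw_def)
    then show ?thesis unfolding esum_def by simp
  qed
  also have "\<dots> = esum (\<lambda>y. esum (\<lambda>x. f x y))"
    using esum_pair[of "\<lambda>p. f (snd p) (fst p)"] by simp
  finally show ?thesis .
qed

lemma esum_delta: "esum (\<lambda>x. if x = a then f x else 0) = f a"
  unfolding esum_def by (subst nn_integral_count_space'[of "{a}"]) auto

lemma esum_delta': "esum (\<lambda>x. if a = x then f x else 0) = f a"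
  using esum_delta[of a f] by (simp add: eq_commute)

lemma esum_mult_delta: "esum (\<lambda>x. f x * (if x = a then 1 else 0)) = f a"
  by (subst esum_cong[where g="\<lambda>x. if x = a then f x else 0"]) (auto simp: esum_delta)

lemma esum_delta_mult: "esum (\<lambda>x. (if a = x then 1 else 0) * f x) = f a"
  by (subst esum_cong[where g="\<lambda>x. if x = a then f x else 0"]) (auto simp: esum_delta)

lemma esum_zero [simp]: "esum (\<lambda>x. 0) = 0"
  unfolding esum_def by simp

lemma esum_suminf: "esum (\<lambda>x. \<Sum>k. f k x) = (\<Sum>k. esum (f k))"
  unfolding esum_def by (rule nn_integral_suminf) auto

lemma esum_sum: "finite I \<Longrightarrow> esum (\<lambda>x. \<Sum>k\<in>I. f k x) = (\<Sum>k\<in>I. esum (f k))"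
  unfolding esum_def by (rule nn_integral_sum) auto

lemma esum_nat: "esum (f :: nat \<Rightarrow> ennreal) = suminf f"
  unfolding esum_def by (rule nn_integral_count_space_nat)

lemma esum_reindex:
  assumes "inj g" "\<And>y. y \<notin> range g \<Longrightarrow> f y = 0"
  shows "esum (\<lambda>x. f (g x)) = esum f"
proof -
  have "(\<integral>\<^sup>+ x. f (g x) \<partial>count_space UNIV) = (\<integral>\<^sup>+ y. f y \<partial>count_space (range g))"
    by (rule nn_integral_bij_count_space) (use assms in \<open>auto simp: bij_betw_def\<close>)
  also have "\<dots> = (\<integral>\<^sup>+ y. f y * indicator (range g) y \<partial>count_space UNIV)"
    by (subst nn_integral_count_space_indicator) auto
  also have "\<dots> = (\<integral>\<^sup>+ y. f y \<partial>count_space UNIV)"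
    by (rule nn_integral_cong) (use assms in \<open>auto split: split_indicator\<close>)
  finally show ?thesis unfolding esum_def .
qed

lemma esum_upper: "f a \<le> esum f"
proof -
  have "f a = esum (\<lambda>x. if x = a then f x else 0)" by (simp add: esum_delta)
  also have "\<dots> \<le> esum f" by (rule esum_mono) auto
  finally show ?thesis .
qed

lemma esum_eq_0_iff: "esum f = 0 \<longleftrightarrow> (\<forall>x. f x = 0)"
proof
  assume "esum f = 0" then show "\<forall>x. f x = 0" using esum_upper[of f] by (metis le_zero_eq)
next
  assume "\<forall>x. f x = 0" then have "f = (\<lambda>x. 0)" by auto
  then show "esum f = 0" by simp
qed

lemma esum_list_cases: "esum (f :: 'a list \<Rightarrow> ennreal) = f [] + esum (\<lambda>p. f (fst p # snd p))"
proof -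
  have "esum f = esum (\<lambda>x. (if x = [] then f x else 0) + (if x \<noteq> [] then f x else 0))"
    by (rule esum_cong) auto
  also have "\<dots> = f [] + esum (\<lambda>x. if x \<noteq> [] then f x else 0)"
    by (simp add: esum_add esum_delta)
  also have "esum (\<lambda>x. if x \<noteq> [] then f x else 0) = esum (\<lambda>p. f (fst p # snd p))"
  proof -
    have "esum (\<lambda>p. (\<lambda>x. if x \<noteq> [] then f x else 0) ((\<lambda>p. fst p # snd p) p)) = esum (\<lambda>x. if x \<noteq> [] then f x else 0)"
      by (rule esum_reindex) (auto simp: inj_def neq_Nil_conv image_iff)
    then show ?thesis by simp
  qed
  finally show ?thesis .
qed

lemma esum_list_by_length: "esum (f :: 'a list \<Rightarrow> ennreal) = (\<Sum>k. esum (\<lambda>u. if length u = k then f u else 0))"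
proof -
  have "esum f = esum (\<lambda>u. \<Sum>k. if length u = k then f u else 0)"
  proof (rule esum_cong)
    fix u
    have "(\<Sum>k. if length u = k then f u else 0) = (\<Sum>k\<in>{length u}. if length u = k then f u else 0)"
      by (rule suminf_finite) auto
    then show "f u = (\<Sum>k. if length u = k then f u else 0)" by simp
  qed
  then show ?thesis by (simp add: esum_suminf)
qed

lemma count_list_esum: "(of_nat (count_list c m) :: ennreal) = esum (\<lambda>u. esum (\<lambda>v. if c = u @ m # v then 1 else 0))"
proof (induction c)
  case Nil
  then show ?case by simp
next
  case (Cons x c)
  have "esum (\<lambda>u. esum (\<lambda>v. if x # c = u @ m # v then (1::ennreal) else 0)) =
      esum (\<lambda>v. if x # c = m # v then 1 else 0) +
      esum (\<lambda>p. esum (\<lambda>v. if x # c = fst p # snd p @ m # v then 1 else 0))"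
    using esum_list_cases[of "\<lambda>u. esum (\<lambda>v. if x # c = u @ m # v then (1::ennreal) else 0)"] by simp
  also have "esum (\<lambda>v. if x # c = m # v then (1::ennreal) else 0) = (if x = m then 1 else 0)"
  proof (cases "x = m")
    case True
    then show ?thesis using esum_delta'[of c "\<lambda>_. (1::ennreal)"] by simp
  next
    case False then show ?thesis by simp
  qed
  also have "esum (\<lambda>p. esum (\<lambda>v. if x # c = fst p # snd p @ m # v then (1::ennreal) else 0)) =
      esum (\<lambda>a. esum (\<lambda>u. esum (\<lambda>v. if x # c = a # u @ m # v then 1 else 0)))"
    by (rule esum_pair')
  also have "\<dots> = esum (\<lambda>a. if a = x then esum (\<lambda>u. esum (\<lambda>v. if c = u @ m # v then (1::ennreal) else 0)) else 0)"
  proof (rule esum_cong)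
    fix a
    show "esum (\<lambda>u. esum (\<lambda>v. if x # c = a # u @ m # v then (1::ennreal) else 0)) =
      (if a = x then esum (\<lambda>u. esum (\<lambda>v. if c = u @ m # v then (1::ennreal) else 0)) else 0)"
    proof (cases "a = x")
      case True then show ?thesis by simp
    next
      case False then show ?thesis by simp
    qed
  qed
  also have "\<dots> = of_nat (count_list c m)" by (simp only: esum_delta Cons.IH)
  finally show ?case by simp
qed

lemma ennreal_suminf_tail_le:
  fixes f :: "nat \<Rightarrow> ennreal"
  assumes "suminf f \<noteq> \<infinity>" "0 < e"
  shows "\<exists>K. (\<Sum>j. f (j + K)) \<le> ennreal e"
proof -
  define g where "g j = enn2real (f j)" for j
  have fin: "f j \<noteq> \<infinity>" for j
  proof -
    have "f j \<le> suminf f" using esum_upper[of f j] by (simp add: esum_nat)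
    then show ?thesis using assms(1) by (auto simp: top_unique)
  qed
  have fg: "f j = ennreal (g j)" for j using fin[of j] by (cases "f j") (auto simp: g_def)
  have g0: "0 \<le> g j" for j by (simp add: g_def)
  have sg: "summable g" using assms(1) g0 by (intro summable_suminf_not_top) (auto simp: fg[symmetric])
  obtain K where K: "\<forall>n\<ge>K. norm (\<Sum>i. g (i + n)) < e" using suminf_exist_split[OF assms(2) sg] by blast
  have "(\<Sum>j. f (j + K)) = ennreal (\<Sum>j. g (j + K))"
    by (simp add: fg suminf_ennreal2 g0 sg summable_iff_shift)
  also have "\<dots> \<le> ennreal e" using K by (intro ennreal_leI) auto
  finally show ?thesis by blast
qed

lemma esum_indicator_nn_integral: "esum (\<lambda>x. if x \<in> A then f x else 0) = (\<integral>\<^sup>+x. f x \<partial>count_space A)"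
proof (cases "A = UNIV")
  case True then show ?thesis by (simp add: esum_def)
next
  case False
  then have "NO_MATCH (UNIV::'a set) A" by simp
  then show ?thesis unfolding esum_def
    by (subst nn_integral_count_space_indicator) (auto intro!: nn_integral_cong split: split_indicator)
qed

lemma has_sum_if_esum:
  fixes f :: "'a \<Rightarrow> real"
  assumes nn: "\<And>x. x \<in> A \<Longrightarrow> 0 \<le> f x"
    and eq: "esum (\<lambda>x. if x \<in> A then ennreal (f x) else 0) = ennreal s" and s: "0 \<le> s"
  shows "(f has_sum s) A"
proof -
  have nni: "(\<integral>\<^sup>+x. ennreal (f x) \<partial>count_space A) = ennreal s" using eq by (simp add: esum_indicator_nn_integral)
  have int: "integrable (count_space A) f"
    by (rule integrableI_nn_integral_finite[OF _ _ nni]) (auto simp: AE_count_space nn)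
  then have abs: "Infinite_Set_Sum.abs_summable_on f A" by (simp add: abs_summable_on_def)
  have "infsetsum f A = enn2real (\<integral>\<^sup>+x. ennreal (f x) \<partial>count_space A)"
    by (rule infsetsum_conv_nn_integral) (use nni nn in auto)
  then have "infsetsum f A = s" using nni s by simp
  then have inf: "infsum f A = s" using infsetsum_infsum[OF abs] by simp
  have "Infinite_Sum.abs_summable_on f A" using abs abs_summable_equivalent by blast
  then have "f summable_on A" by (rule abs_summable_summable)
  then show ?thesis using inf by (simp add: has_sum_iff)
qed

lemma esum_if_has_sum:
  fixes f :: "'a \<Rightarrow> real"
  assumes nn: "\<And>x. x \<in> A \<Longrightarrow> 0 \<le> f x" and hs: "(f has_sum s) A"
  shows "esum (\<lambda>x. if x \<in> A then ennreal (f x) else 0) = ennreal s"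
proof -
  have "f summable_on A" using hs by (auto simp: summable_on_def)
  then have "Infinite_Sum.abs_summable_on f A" using summable_on_iff_abs_summable_on_real by blast
  then have abs: "Infinite_Set_Sum.abs_summable_on f A" using abs_summable_equivalent by blast
  have "(\<integral>\<^sup>+x. ennreal (f x) \<partial>count_space A) = ennreal (infsetsum f A)"
    by (rule nn_integral_conv_infsetsum[OF abs]) (use nn in auto)
  also have "infsetsum f A = s" using infsetsum_infsum[OF abs] hs by (simp add: has_sum_iff)
  finally show ?thesis by (simp add: esum_indicator_nn_integral)
qed

lemma esum_ennreal_suminf:
  fixes f :: "nat \<Rightarrow> real"
  assumes "\<And>n. 0 \<le> f n" "summable f"
  shows "esum (\<lambda>n. ennreal (f n)) = ennreal (\<Sum>n. f n)"
  using assms by (simp add: esum_nat suminf_ennreal2)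

fun walk_weight :: "(nat \<Rightarrow> nat \<Rightarrow> ennreal) \<Rightarrow> nat list \<Rightarrow> ennreal" where
  "walk_weight P [] = 1" | "walk_weight P [n] = 1" | "walk_weight P (n # m # r) = P n m * walk_weight P (m # r)"

lemma walk_weight_append: "walk_weight P (xs @ m # ys) = walk_weight P (xs @ [m]) * walk_weight P (m # ys)"
proof (induction xs)
  case Nil then show ?case by simp
next
  case (Cons a xs) then show ?case by (cases xs) (simp_all add: mult.assoc)
qed

text \<open>A Markov chain on the states N with sub-stochastic kernel P, killed in n with
  probability \<sigma> n and started from the measure \<iota>; q is a finite solution of the balance
  equation q = \<iota> + q P.  Acyclicity of P will force q to be the expected occupation measure,
  and \<open>chain_weight\<close> then decomposes q over the finite trajectories.\<close>
locale killed_chain =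
  fixes N :: "nat set" and P :: "nat \<Rightarrow> nat \<Rightarrow> ennreal" and \<iota> \<sigma> q :: "nat \<Rightarrow> ennreal"
  assumes P_out: "\<And>n m. n \<notin> N \<or> m \<notin> N \<Longrightarrow> P n m = 0"
    and \<iota>_out: "\<And>n. n \<notin> N \<Longrightarrow> \<iota> n = 0"
    and stoch: "\<And>n. n \<in> N \<Longrightarrow> esum (P n) + \<sigma> n = 1"
    and balance: "\<And>m. q m = \<iota> m + esum (\<lambda>n. q n * P n m)"
    and qfin: "esum q \<noteq> \<infinity>"
    and acyc: "acyclic {(n,m). P n m \<noteq> 0}"
begin

definition walk_prob :: "nat \<Rightarrow> nat \<Rightarrow> nat \<Rightarrow> ennreal" where
  "walk_prob k n m = esum (\<lambda>v. if length v = k \<and> last (n#v) = m then walk_weight P (n#v) else 0)"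

lemma walk_prob_0: "walk_prob 0 n m = (if n = m then 1 else 0)"
proof -
  have "walk_prob 0 n m = esum (\<lambda>v::nat list. if v = [] then (if n = m then 1 else 0) else 0)"
    unfolding walk_prob_def by (rule esum_cong) auto
  also have "\<dots> = (if n = m then 1 else 0)" using esum_delta[of "[]" "\<lambda>_. if n = m then 1 else 0"] by simp
  finally show ?thesis .
qed

lemma walk_prob_Suc: "walk_prob (Suc k) n m = esum (\<lambda>l. P n l * walk_prob k l m)"
proof -
  have "walk_prob (Suc k) n m = esum (\<lambda>p. (\<lambda>v. if length v = Suc k \<and> last (n#v) = m then walk_weight P (n#v) else 0) (fst p # snd p))"
    unfolding walk_prob_def by (subst esum_list_cases) simp
  also have "\<dots> = esum (\<lambda>l. esum (\<lambda>v. (\<lambda>v. if length v = Suc k \<and> last (n#v) = m then walk_weight P (n#v) else 0) (l # v)))"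
    by (rule esum_pair')
  also have "\<dots> = esum (\<lambda>l. P n l * walk_prob k l m)"
    unfolding walk_prob_def
    by (rule esum_cong, subst esum_cmult_left[symmetric], rule esum_cong) auto
  finally show ?thesis .
qed

lemma walk_prob_1: "walk_prob (Suc 0) n m = P n m"
  by (simp add: walk_prob_Suc walk_prob_0 esum_mult_delta)

lemma walk_prob_Suc_right: "walk_prob (Suc k) n m = esum (\<lambda>l. walk_prob k n l * P l m)"
proof (induction k arbitrary: n)
  case 0
  then show ?case by (simp add: walk_prob_1 walk_prob_0 esum_delta_mult)
next
  case (Suc k)
  have "walk_prob (Suc (Suc k)) n m = esum (\<lambda>l. esum (\<lambda>l'. P n l * (walk_prob k l l' * P l' m)))"
    by (simp add: walk_prob_Suc[of "Suc k"] Suc.IH esum_cmult_left)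
  also have "\<dots> = esum (\<lambda>l'. esum (\<lambda>l. P n l * walk_prob k l l' * P l' m))"
    by (subst esum_swap) (simp add: mult.assoc)
  also have "\<dots> = esum (\<lambda>l'. walk_prob (Suc k) n l' * P l' m)"
    by (simp add: walk_prob_Suc[of k] esum_cmult_right)
  finally show ?case .
qed

lemma walk_prob_add: "walk_prob (j + K) n l = esum (\<lambda>m. walk_prob j n m * walk_prob K m l)"
proof (induction j arbitrary: n)
  case 0
  then show ?case by (simp add: walk_prob_0 esum_delta_mult)
next
  case (Suc j)
  have "walk_prob (Suc j + K) n l = esum (\<lambda>a. esum (\<lambda>m. P n a * (walk_prob j a m * walk_prob K m l)))"
    by (simp add: walk_prob_Suc Suc.IH esum_cmult_left)
  also have "\<dots> = esum (\<lambda>m. esum (\<lambda>a. P n a * walk_prob j a m * walk_prob K m l))"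
    by (subst esum_swap) (simp add: mult.assoc)
  also have "\<dots> = esum (\<lambda>m. walk_prob (Suc j) n m * walk_prob K m l)"
    by (simp add: walk_prob_Suc esum_cmult_right)
  finally show ?case .
qed

definition step_rel where "step_rel = {(n,m). P n m \<noteq> 0}"

lemma walk_prob_rtrancl: "walk_prob k n m \<noteq> 0 \<Longrightarrow> (n,m) \<in> step_rel\<^sup>*"
proof (induction k arbitrary: n)
  case 0
  then show ?case by (simp add: walk_prob_0 split: if_splits)
next
  case (Suc k)
  then obtain l where "P n l * walk_prob k l m \<noteq> 0" by (auto simp: walk_prob_Suc esum_eq_0_iff)
  then have "(n,l) \<in> step_rel" "(l,m) \<in> step_rel\<^sup>*" using Suc.IH by (auto simp: step_rel_def)
  then show ?case by auto
qed

lemma walk_prob_Suc_in_N: "walk_prob (Suc k) n m \<noteq> 0 \<Longrightarrow> m \<in> N"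
  using P_out by (auto simp: walk_prob_Suc_right esum_eq_0_iff)

lemma esum_P_le_1: "esum (P n) \<le> 1"
proof (cases "n \<in> N")
  case True
  then show ?thesis using stoch[OF True] by (metis add_increasing2 le_iff_add zero_le)
next
  case False
  then have "P n = (\<lambda>x. 0)" using P_out by auto
  then show ?thesis by simp
qed

text \<open>By acyclicity a walk visits m0 at most once, so the return probabilities to m0 over
  different numbers of steps add up to at most 1.\<close>
lemma sum_walk_prob_le_1: "(\<Sum>k<K. walk_prob k n m0) \<le> 1"
proof (induction K arbitrary: n)
  case 0
  then show ?case by simp
next
  case (Suc K)
  have split: "(\<Sum>k<Suc K. walk_prob k n m0) = walk_prob 0 n m0 + esum (\<lambda>l. P n l * (\<Sum>k<K. walk_prob k l m0))"
  proof -
    have "(\<Sum>k<Suc K. walk_prob k n m0) = walk_prob 0 n m0 + (\<Sum>k<K. walk_prob (Suc k) n m0)"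
      by (subst sum.lessThan_Suc_shift) simp
    also have "(\<Sum>k<K. walk_prob (Suc k) n m0) = esum (\<lambda>l. P n l * (\<Sum>k<K. walk_prob k l m0))"
      by (simp add: walk_prob_Suc esum_sum sum_distrib_left)
    finally show ?thesis .
  qed
  show ?case
  proof (cases "n = m0")
    case True
    have "esum (\<lambda>l. P n l * (\<Sum>k<K. walk_prob k l m0)) = 0"
    proof (subst esum_eq_0_iff, intro allI)
      fix l
      show "P n l * (\<Sum>k<K. walk_prob k l m0) = 0"
      proof (rule ccontr)
        assume "P n l * (\<Sum>k<K. walk_prob k l m0) \<noteq> 0"
        then obtain k where "P n l \<noteq> 0" "walk_prob k l m0 \<noteq> 0" by auto
        then have "(m0,l) \<in> step_rel" "(l,m0) \<in> step_rel\<^sup>*" using True walk_prob_rtrancl by (auto simp: step_rel_def)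
        then have "(m0,m0) \<in> step_rel\<^sup>+" by auto
        then show False using acyc by (auto simp: acyclic_def step_rel_def)
      qed
    qed
    then show ?thesis using split by (simp add: walk_prob_0 True)
  next
    case False
    have "esum (\<lambda>l. P n l * (\<Sum>k<K. walk_prob k l m0)) \<le> esum (\<lambda>l. P n l * 1)"
      by (rule esum_mono, rule mult_left_mono) (use Suc.IH in auto)
    also have "\<dots> \<le> 1" using esum_P_le_1[of n] by simp
    finally show ?thesis using split False by (simp add: walk_prob_0)
  qed
qed

definition arrival where "arrival j m = esum (\<lambda>n. \<iota> n * walk_prob j n m)"
definition green where "green m = (\<Sum>j. arrival j m)"
definition residual where "residual k m = esum (\<lambda>n. q n * walk_prob k n m)"

lemma residual_Suc: "residual k m = arrival k m + residual (Suc k) m"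
proof -
  have "residual k m = esum (\<lambda>l. (\<iota> l + esum (\<lambda>n. q n * P n l)) * walk_prob k l m)"
    unfolding residual_def by (subst balance) simp
  also have "\<dots> = arrival k m + esum (\<lambda>l. esum (\<lambda>n. q n * P n l) * walk_prob k l m)"
    by (simp add: distrib_right esum_add arrival_def)
  also have "esum (\<lambda>l. esum (\<lambda>n. q n * P n l) * walk_prob k l m) = esum (\<lambda>l. esum (\<lambda>n. q n * (P n l * walk_prob k l m)))"
    by (simp add: esum_cmult_right[symmetric] mult.assoc)
  also have "\<dots> = residual (Suc k) m"
    by (subst esum_swap) (simp add: residual_def walk_prob_Suc esum_cmult_left)
  finally show ?thesis .
qed

lemma q_eq_arrivals_residual: "q m = (\<Sum>j<K. arrival j m) + residual K m"
proof (induction K)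
  case 0
  then show ?case by (simp add: residual_def walk_prob_0 esum_mult_delta)
next
  case (Suc K)
  then show ?case by (simp add: residual_Suc[of K] add.assoc)
qed

lemma residual_antimono: "k \<le> K \<Longrightarrow> residual K m \<le> residual k m"
proof (induction K rule: dec_induct)
  case base then show ?case by simp
next
  case (step K)
  have "residual (Suc K) m \<le> residual K m" using residual_Suc[of K m] by (metis add.commute le_iff_add)
  then show ?case using step.IH by order
qed

lemma sum_residual_le: "(\<Sum>k<K. residual k m) \<le> esum q"
proof -
  have "(\<Sum>k<K. residual k m) = esum (\<lambda>n. q n * (\<Sum>k<K. walk_prob k n m))"
    by (simp add: residual_def esum_sum sum_distrib_left)
  also have "\<dots> \<le> esum (\<lambda>n. q n * 1)"
    by (rule esum_mono, rule mult_left_mono) (use sum_walk_prob_le_1 in auto)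
  finally show ?thesis by simp
qed

lemma residual_bound: "of_nat K * residual K m \<le> esum q"
proof -
  have "of_nat K * residual K m = (\<Sum>k<K. residual K m)" by simp
  also have "\<dots> \<le> (\<Sum>k<K. residual k m)" by (rule sum_mono) (auto intro: residual_antimono)
  also have "\<dots> \<le> esum q" by (rule sum_residual_le)
  finally show ?thesis .
qed

lemma green_le_q: "green m \<le> q m"
  unfolding green_def suminf_eq_SUP
proof (rule SUP_least)
  fix K show "(\<Sum>j<K. arrival j m) \<le> q m" by (subst q_eq_arrivals_residual[of m K]) simp
qed

text \<open>The residual mass after K steps is at most esum q / K, so it vanishes in the limit.\<close>
lemma green_eq_q: "green m = q m"
proof (rule antisym[OF green_le_q])
  show "q m \<le> green m"
  proof (rule ennreal_le_epsilon)
    fix e :: real assume "0 < e"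
    obtain c where c: "esum q = ennreal c" "0 \<le> c" using qfin by (cases "esum q") auto
    define K where "K = nat \<lceil>c / e\<rceil> + 1"
    have K: "c / e < real K" "0 < K" unfolding K_def by linarith+
    have "residual 0 m \<le> esum q" using q_eq_arrivals_residual[of m 0] esum_upper[of q m] by simp
    then have "residual K m \<noteq> \<infinity>" using residual_antimono[of 0 K m] qfin by (auto simp: top_unique)
    then obtain r where r: "residual K m = ennreal r" "0 \<le> r" by (cases "residual K m") auto
    have "ennreal (real K * r) \<le> ennreal c" using residual_bound[of K m] c r
      by (simp add: ennreal_mult ennreal_of_nat_eq_real_of_nat)
    then have "real K * r \<le> c" using c by (simp add: ennreal_le_iff)
    then have "r \<le> e" using K \<open>0 < e\<close> r
      by (smt (verit, ccfv_SIG) divide_less_eq mult_le_cancel_left_pos mult.commute of_nat_0_less_iff)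
    have "q m = (\<Sum>j<K. arrival j m) + residual K m" by (rule q_eq_arrivals_residual)
    also have "\<dots> \<le> green m + ennreal e"
      using sum_le_suminf[OF summableI, of "{..<K}" "\<lambda>j. arrival j m"] r \<open>r \<le> e\<close> unfolding green_def
      by (intro add_mono) (auto simp: ennreal_leI)
    finally show "q m \<le> green m + ennreal e" .
  qed
qed

definition survival where "survival K m = esum (\<lambda>l. walk_prob K m l)"
definition killed_before where "killed_before K m = (\<Sum>k<K. esum (\<lambda>l. walk_prob k m l * \<sigma> l))"
definition kill_prob where "kill_prob m = (\<Sum>k. esum (\<lambda>l. walk_prob k m l * \<sigma> l))"

lemma survival_0: "survival 0 m = 1"
  unfolding survival_def walk_prob_0 using esum_delta'[of m "\<lambda>_. 1::ennreal"] by simp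

lemma walk_prob_stoch:
  assumes "m \<in> N" shows "walk_prob K m l = walk_prob K m l * (\<sigma> l + esum (P l))"
proof (cases "l \<in> N")
  case True
  then show ?thesis using stoch[OF True] by (simp add: add.commute)
next
  case False
  have "walk_prob K m l = 0"
  proof (cases K)
    case 0 then show ?thesis using False assms by (auto simp: walk_prob_0)
  next
    case (Suc k) then show ?thesis using walk_prob_Suc_in_N[of k m l] False by auto
  qed
  then show ?thesis by simp
qed

lemma killed_before_survival: assumes "m \<in> N" shows "killed_before K m + survival K m = 1"
proof (induction K)
  case 0
  then show ?case by (simp add: killed_before_def survival_0)
next
  case (Suc K)
  have "survival K m = esum (\<lambda>l. walk_prob K m l * (\<sigma> l + esum (P l)))"
    unfolding survival_def using walk_prob_stoch[OF assms] by metis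
  also have "\<dots> = esum (\<lambda>l. walk_prob K m l * \<sigma> l) + esum (\<lambda>l. esum (\<lambda>l'. walk_prob K m l * P l l'))"
    by (simp add: distrib_left esum_add esum_cmult_left)
  also have "esum (\<lambda>l. esum (\<lambda>l'. walk_prob K m l * P l l')) = survival (Suc K) m"
    by (subst esum_swap) (simp add: survival_def walk_prob_Suc_right)
  finally have "survival K m = esum (\<lambda>l. walk_prob K m l * \<sigma> l) + survival (Suc K) m" .
  then show ?case using Suc.IH by (simp add: killed_before_def add.assoc)
qed

lemma killed_before_le_kill_prob: "killed_before K m \<le> kill_prob m"
  unfolding killed_before_def kill_prob_def by (rule sum_le_suminf) auto

lemma kill_prob_le_1: assumes "m \<in> N" shows "kill_prob m \<le> 1"
  unfolding kill_prob_def suminf_eq_SUP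
proof (rule SUP_least)
  fix K show "(\<Sum>k<K. esum (\<lambda>l. walk_prob k m l * \<sigma> l)) \<le> 1"
    using killed_before_survival[OF assms, of K] unfolding killed_before_def by (metis le_iff_add)
qed

definition arrivals where "arrivals j = esum (\<lambda>m. arrival j m)"

lemma esum_arrival_survival: "esum (\<lambda>m. arrival j m * survival K m) = esum (\<lambda>n. \<iota> n * survival (j + K) n)"
proof -
  have "arrival j m * survival K m = esum (\<lambda>n. esum (\<lambda>l. \<iota> n * (walk_prob j n m * walk_prob K m l)))" for m
    unfolding arrival_def survival_def by (simp add: esum_cmult_right[symmetric] esum_cmult_left[symmetric] mult.assoc) (rule esum_swap)
  then have "esum (\<lambda>m. arrival j m * survival K m) = esum (\<lambda>m. esum (\<lambda>n. esum (\<lambda>l. \<iota> n * (walk_prob j n m * walk_prob K m l))))"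
    by simp
  also have "\<dots> = esum (\<lambda>n. esum (\<lambda>m. esum (\<lambda>l. \<iota> n * (walk_prob j n m * walk_prob K m l))))"
    by (rule esum_swap)
  also have "\<dots> = esum (\<lambda>n. esum (\<lambda>l. esum (\<lambda>m. \<iota> n * (walk_prob j n m * walk_prob K m l))))"
    by (subst esum_swap) simp
  also have "\<dots> = esum (\<lambda>n. \<iota> n * survival (j + K) n)"
    by (simp add: survival_def walk_prob_add esum_cmult_left)
  finally show ?thesis .
qed

lemma arrivals_eq: "arrivals j = esum (\<lambda>n. \<iota> n * survival j n)"
  using esum_arrival_survival[of j 0] by (simp add: arrivals_def survival_0)

lemma esum_green_survival: "esum (\<lambda>m. green m * survival K m) = (\<Sum>j. arrivals (j + K))"
proof -
  have "esum (\<lambda>m. green m * survival K m) = esum (\<lambda>m. \<Sum>j. arrival j m * survival K m)"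
    by (simp add: green_def)
  also have "\<dots> = (\<Sum>j. esum (\<lambda>m. arrival j m * survival K m))" by (rule esum_suminf)
  also have "\<dots> = (\<Sum>j. arrivals (j + K))" by (simp add: esum_arrival_survival arrivals_eq)
  finally show ?thesis .
qed

lemma suminf_arrivals: "(\<Sum>j. arrivals j) = esum q"
proof -
  have "(\<Sum>j. arrivals j) = esum (\<lambda>m. \<Sum>j. arrival j m)" unfolding arrivals_def by (rule esum_suminf[symmetric])
  also have "\<dots> = esum q" by (simp add: green_def[symmetric] green_eq_q)
  finally show ?thesis .
qed

lemma green_outside: "m \<notin> N \<Longrightarrow> green m = 0"
proof -
  assume m: "m \<notin> N"
  have "arrival j m = 0" for j
  proof (cases j)
    case 0 then show ?thesis using \<iota>_out[OF m] by (simp add: arrival_def walk_prob_0 esum_mult_delta)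
  next
    case (Suc k)
    then have "walk_prob j n m = 0" for n using walk_prob_Suc_in_N[of k n m] m by auto
    then show ?thesis by (simp add: arrival_def)
  qed
  then show "green m = 0" by (simp add: green_def)
qed

lemma green_kill_prob: "green m * kill_prob m = green m"
proof (cases "m \<in> N")
  case False then show ?thesis by (simp add: green_outside)
next
  case mN: True
  show ?thesis
  proof (rule antisym)
    show "green m * kill_prob m \<le> green m" using kill_prob_le_1[OF mN] by (metis mult.right_neutral mult_left_mono zero_le)
    show "green m \<le> green m * kill_prob m"
    proof (rule ennreal_le_epsilon)
      fix e :: real assume "0 < e"
      have "suminf arrivals \<noteq> \<infinity>" using suminf_arrivals qfin by simp
      then obtain K where K: "(\<Sum>j. arrivals (j + K)) \<le> ennreal e" using ennreal_suminf_tail_le \<open>0 < e\<close> by blast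
      have "green m * survival K m \<le> esum (\<lambda>m. green m * survival K m)" by (rule esum_upper[where f="\<lambda>m. green m * survival K m"])
      also have "\<dots> \<le> ennreal e" using K esum_green_survival by simp
      finally have 1: "green m * survival K m \<le> ennreal e" .
      have "green m = green m * (killed_before K m + survival K m)" using killed_before_survival[OF mN] by simp
      also have "\<dots> = green m * killed_before K m + green m * survival K m" by (simp add: distrib_left)
      also have "\<dots> \<le> green m * kill_prob m + ennreal e"
        by (intro add_mono mult_left_mono killed_before_le_kill_prob 1) auto
      finally show "green m \<le> green m * kill_prob m + ennreal e" .
    qed
  qed
qed

definition chain_weight :: "nat list \<Rightarrow> ennreal" where
  "chain_weight c = (if c = [] then 0 else \<iota> (hd c) * walk_weight P c * \<sigma> (last c))"

lemma esum_prefix_weight: "esum (\<lambda>u. \<iota> (hd (u@[m])) * walk_weight P (u@[m])) = green m"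
proof -
  define F where "F x = \<iota> (hd x) * walk_weight P x" for x
  have step2: "esum (\<lambda>u. if length u = k then F (u@[m]) else 0) =
      esum (\<lambda>x. if length x = Suc k \<and> last x = m then F x else 0)" for k
  proof -
    have "esum (\<lambda>u. (\<lambda>x. if length x = Suc k \<and> last x = m then F x else 0) (u @ [m])) =
        esum (\<lambda>x. if length x = Suc k \<and> last x = m then F x else 0)"
    proof (rule esum_reindex)
      show "inj (\<lambda>u. u @ [m])" by (auto simp: inj_def)
      fix y assume "y \<notin> range (\<lambda>u. u @ [m])"
      then show "(if length y = Suc k \<and> last y = m then F y else 0) = 0"
        by (metis (no_types, lifting) append_butlast_last_id length_0_conv nat.distinct(1) rangeI)
    qed
    then show ?thesis by (simp cong: if_cong)
  qed
  have step3: "arrival k m = esum (\<lambda>x. if length x = Suc k \<and> last x = m then F x else 0)" for k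
  proof -
    have "esum (\<lambda>x. if length x = Suc k \<and> last x = m then F x else 0) =
        esum (\<lambda>p. (\<lambda>x. if length x = Suc k \<and> last x = m then F x else 0) (fst p # snd p))"
      by (subst esum_list_cases) simp
    also have "\<dots> = esum (\<lambda>n. esum (\<lambda>v. (\<lambda>x. if length x = Suc k \<and> last x = m then F x else 0) (n # v)))"
      by (rule esum_pair')
    also have "\<dots> = arrival k m"
      unfolding arrival_def walk_prob_def F_def
      by (rule esum_cong, subst esum_cmult_left[symmetric], rule esum_cong) auto
    finally show ?thesis ..
  qed
  have "esum (\<lambda>u. F (u@[m])) = (\<Sum>k. esum (\<lambda>u. if length u = k then F (u@[m]) else 0))"
    by (rule esum_list_by_length)
  also have "\<dots> = (\<Sum>k. arrival k m)" by (simp add: step2 step3)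
  finally show ?thesis by (simp add: F_def green_def)
qed

lemma esum_suffix_weight: "esum (\<lambda>v. walk_weight P (m#v) * \<sigma> (last (m#v))) = kill_prob m"
proof -
  have "esum (\<lambda>l. walk_prob k m l * \<sigma> l) = esum (\<lambda>v. if length v = k then walk_weight P (m#v) * \<sigma> (last (m#v)) else 0)" for k
  proof -
    have "esum (\<lambda>l. walk_prob k m l * \<sigma> l) = esum (\<lambda>l. esum (\<lambda>v. if length v = k \<and> last (m#v) = l then walk_weight P (m#v) * \<sigma> l else 0))"
      unfolding walk_prob_def by (rule esum_cong, subst esum_cmult_right[symmetric], rule esum_cong) simp
    also have "\<dots> = esum (\<lambda>v. esum (\<lambda>l. if length v = k \<and> last (m#v) = l then walk_weight P (m#v) * \<sigma> l else 0))"
      by (rule esum_swap)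
    also have "\<dots> = esum (\<lambda>v. if length v = k then walk_weight P (m#v) * \<sigma> (last (m#v)) else 0)"
    proof (rule esum_cong)
      fix v
      show "esum (\<lambda>l. if length v = k \<and> last (m#v) = l then walk_weight P (m#v) * \<sigma> l else 0) =
          (if length v = k then walk_weight P (m#v) * \<sigma> (last (m#v)) else 0)"
      proof -
        have gen: "esum (\<lambda>l. if length v = k \<and> z = l then walk_weight P (m#v) * \<sigma> l else 0) =
          (if length v = k then walk_weight P (m#v) * \<sigma> z else 0)" for z
          by (cases "length v = k") (simp_all add: esum_delta')
        show ?thesis by (rule gen)
      qed
    qed
    finally show ?thesis .
  qed
  then show ?thesis unfolding kill_prob_def by (simp add: esum_list_by_length[symmetric])
qed

lemma esum_chain_weight_last: "esum (\<lambda>c. if c \<noteq> [] \<and> last c = m then chain_weight c else 0) = q m * \<sigma> m"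
proof -
  have "esum (\<lambda>u. (\<lambda>c. if c \<noteq> [] \<and> last c = m then chain_weight c else 0) (u @ [m])) =
      esum (\<lambda>c. if c \<noteq> [] \<and> last c = m then chain_weight c else 0)"
  proof (rule esum_reindex)
    show "inj (\<lambda>u. u @ [m])" by (auto simp: inj_def)
    fix y assume "y \<notin> range (\<lambda>u. u @ [m])"
    then show "(if y \<noteq> [] \<and> last y = m then chain_weight y else 0) = 0"
      by (metis append_butlast_last_id rangeI)
  qed
  moreover have "esum (\<lambda>u. (\<lambda>c. if c \<noteq> [] \<and> last c = m then chain_weight c else 0) (u @ [m])) = green m * \<sigma> m"
    by (simp add: chain_weight_def esum_prefix_weight esum_cmult_right)
  ultimately show ?thesis by (simp add: green_eq_q)
qed

lemma entrance_kill_prob: "\<iota> m * kill_prob m = \<iota> m"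
proof (cases "\<iota> m = 0")
  case True then show ?thesis by simp
next
  case False
  have "\<iota> m \<le> green m"
  proof -
    have "arrival 0 m = \<iota> m" by (simp add: arrival_def walk_prob_0 esum_mult_delta)
    moreover have "arrival 0 m \<le> green m" unfolding green_def using esum_upper[of "\<lambda>j. arrival j m" 0] by (simp add: esum_nat)
    ultimately show ?thesis by simp
  qed
  then have "green m \<noteq> 0" using False by auto
  moreover have "green m \<noteq> \<infinity>" using green_eq_q esum_upper[of q m] qfin by (auto simp: top_unique)
  ultimately obtain r where r: "green m = ennreal r" "0 < r"
    by (cases "green m") (auto simp: ennreal_eq_0_iff)
  have "kill_prob m * ennreal r = 1 * ennreal r" using green_kill_prob[of m] r by (simp add: mult.commute)
  then have "kill_prob m = 1" using r mult_right_ennreal_cancel[of "kill_prob m" r 1] by simp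
  then show ?thesis by simp
qed

lemma esum_chain_weight_hd: "esum (\<lambda>c. if c \<noteq> [] \<and> hd c = m then chain_weight c else 0) = \<iota> m"
proof -
  have "esum (\<lambda>v. (\<lambda>c. if c \<noteq> [] \<and> hd c = m then chain_weight c else 0) (m # v)) =
      esum (\<lambda>c. if c \<noteq> [] \<and> hd c = m then chain_weight c else 0)"
  proof (rule esum_reindex)
    show "inj (\<lambda>v. m # v)" by (auto simp: inj_def)
    fix y assume "y \<notin> range (\<lambda>v. m # v)"
    then show "(if y \<noteq> [] \<and> hd y = m then chain_weight y else 0) = 0"
      by (metis list.collapse rangeI)
  qed
  moreover have "esum (\<lambda>v. (\<lambda>c. if c \<noteq> [] \<and> hd c = m then chain_weight c else 0) (m # v)) = \<iota> m * kill_prob m"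
    by (simp add: chain_weight_def esum_suffix_weight[symmetric] esum_cmult_left mult.assoc)
  ultimately show ?thesis by (simp add: entrance_kill_prob)
qed

lemma chain_weight_split:
  "chain_weight (u @ m # v) = (\<iota> (hd (u@[m])) * walk_weight P (u@[m])) * (walk_weight P (m#v) * \<sigma> (last (m#v)))"
proof -
  have "hd (u @ m # v) = hd (u @ [m])" by (cases u) auto
  then show ?thesis by (simp add: chain_weight_def walk_weight_append[of P u m v] mult.assoc)
qed

lemma esum_chain_weight_count: "esum (\<lambda>c. chain_weight c * of_nat (count_list c m)) = q m"
proof -
  have "esum (\<lambda>c. chain_weight c * of_nat (count_list c m)) =
      esum (\<lambda>c. esum (\<lambda>u. esum (\<lambda>v. if c = u @ m # v then chain_weight c else 0)))"
  proof (rule esum_cong)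
    fix c
    show "chain_weight c * of_nat (count_list c m) = esum (\<lambda>u. esum (\<lambda>v. if c = u @ m # v then chain_weight c else 0))"
      by (simp only: count_list_esum esum_cmult_left[symmetric]) (rule esum_cong, rule esum_cong, simp)
  qed
  also have "\<dots> = esum (\<lambda>u. esum (\<lambda>c. esum (\<lambda>v. if c = u @ m # v then chain_weight c else 0)))"
    by (rule esum_swap)
  also have "\<dots> = esum (\<lambda>u. esum (\<lambda>v. esum (\<lambda>c. if c = u @ m # v then chain_weight c else 0)))"
    by (rule esum_cong) (rule esum_swap)
  also have "\<dots> = esum (\<lambda>u. esum (\<lambda>v. chain_weight (u @ m # v)))"
    by (simp add: esum_delta)
  also have "\<dots> = esum (\<lambda>u. esum (\<lambda>v. (\<iota> (hd (u@[m])) * walk_weight P (u@[m])) * (walk_weight P (m#v) * \<sigma> (last (m#v)))))"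
    by (simp only: chain_weight_split)
  also have "\<dots> = green m * kill_prob m"
    by (simp only: esum_cmult_left esum_cmult_right esum_prefix_weight esum_suffix_weight)
  also have "\<dots> = q m" by (metis green_kill_prob green_eq_q)
  finally show ?thesis .
qed

end

definition edges :: "'a list \<Rightarrow> ('a \<times> 'a) list" where "edges xs = zip xs (tl xs)"

lemma set_edges: "set (edges xs) = {(xs ! i, xs ! Suc i) | i. Suc i < length xs}"
  unfolding edges_def by (auto simp: set_zip nth_tl)

lemma path_flow_nonneg: "0 \<le> path_flow xs e" by (simp add: path_flow_def)

lemma path_flow_edges: "path_flow xs e = (if e \<in> set (edges xs) then 1 else 0)"
  unfolding path_flow_def set_edges by auto

lemma dpath_iff_edges: "dpath V E xs \<longleftrightarrow> xs \<noteq> [] \<and> set xs \<subseteq> V \<and> set (edges xs) \<subseteq> E"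
  unfolding dpath_def set_edges by auto

lemma edges_short: "length xs < 2 \<Longrightarrow> edges xs = []"
  unfolding edges_def by (cases xs) auto

lemma edges_Cons: "edges (a # L) = (if L = [] then [] else (a, hd L) # edges L)"
  unfolding edges_def by (cases L) auto

lemma edges_butlast_append: "xs \<noteq> [] \<Longrightarrow> ys \<noteq> [] \<Longrightarrow> last xs = hd ys \<Longrightarrow> edges (butlast xs @ ys) = edges xs @ edges ys"
proof (induction xs)
  case Nil then show ?case by simp
next
  case (Cons a xs)
  show ?case
  proof (cases xs)
    case Nil
    then show ?thesis using Cons.prems by (simp add: edges_Cons)
  next
    case (Cons b zs)
    then have ne: "xs \<noteq> []" by simp
    have hd: "hd (butlast xs @ ys) = hd xs"
    proof (cases "butlast xs = []")
      case True
      then have "xs = [last xs]" using ne by (metis append_butlast_last_id append_Nil)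
      then have "hd xs = last xs" by (metis list.sel(1))
      then show ?thesis using True Cons.prems ne by (simp split: if_splits)
    next
      case False
      have "hd (butlast xs) = hd xs" using False ne by (metis append_butlast_last_id hd_append2)
      then show ?thesis using False by simp
    qed
    have "edges (butlast (a # xs) @ ys) = edges (a # (butlast xs @ ys))" using ne by simp
    also have "\<dots> = (a, hd xs) # edges (butlast xs @ ys)" using Cons.prems hd by (simp add: edges_Cons)
    also have "edges (butlast xs @ ys) = edges xs @ edges ys" using Cons.IH Cons.prems ne by simp
    finally show ?thesis using ne by (simp add: edges_Cons)
  qed
qed

lemma edges_nth_trancl:
  assumes "set (edges xs) \<subseteq> R" "i < j" "j < length xs"
  shows "(xs ! i, xs ! j) \<in> R\<^sup>+"
  using assms(2,3)
proof (induction j)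
  case 0 then show ?case by simp
next
  case (Suc j)
  have e: "(xs ! j, xs ! Suc j) \<in> R" using assms(1) Suc.prems unfolding set_edges by auto
  show ?case
  proof (cases "i = j")
    case True then show ?thesis using e by auto
  next
    case False
    then have "(xs ! i, xs ! j) \<in> R\<^sup>+" using Suc by auto
    then show ?thesis using e by auto
  qed
qed

lemma distinct_if_edges_acyclic:
  assumes "set (edges xs) \<subseteq> R" "acyclic R"
  shows "distinct xs"
proof (rule ccontr)
  assume "\<not> distinct xs"
  then obtain i j where ij: "i < j" "j < length xs" "xs ! i = xs ! j"
    by (metis distinct_conv_nth linorder_neqE_nat)
  then have "(xs ! i, xs ! i) \<in> R\<^sup>+" using edges_nth_trancl[OF assms(1) ij(1,2)] by simp
  then show False using assms(2) by (auto simp: acyclic_def)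
qed

lemma hd_last_trancl_if_edges:
  assumes "set (edges xs) \<subseteq> R" "2 \<le> length xs"
  shows "(hd xs, last xs) \<in> R\<^sup>+"
proof -
  have "(xs ! 0, xs ! (length xs - 1)) \<in> R\<^sup>+" using edges_nth_trancl[OF assms(1)] assms(2) by auto
  moreover have "xs \<noteq> []" using assms(2) by auto
  moreover have "xs ! 0 = hd xs" "xs ! (length xs - 1) = last xs" using \<open>xs \<noteq> []\<close>
    by (auto simp: hd_conv_nth last_conv_nth)
  ultimately show ?thesis by simp
qed

lemma distinct_edges: "distinct xs \<Longrightarrow> distinct (edges xs)"
  unfolding edges_def by (rule distinct_zipI1)

lemma hd_neq_last_if_distinct: "distinct xs \<Longrightarrow> 2 \<le> length xs \<Longrightarrow> hd xs \<noteq> last xs"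
  by (cases xs rule: rev_exhaust) (auto simp: hd_append)

lemma count_list_distinct: "distinct ys \<Longrightarrow> count_list ys e = (if e \<in> set ys then 1 else 0)"
  by (induction ys) auto

lemma path_flow_count_list: "distinct xs \<Longrightarrow> path_flow xs e = real (count_list (edges xs) e)"
  by (simp add: path_flow_edges count_list_distinct distinct_edges)

lemma count_list_concat: "count_list (concat xss) e = sum_list (map (\<lambda>xs. count_list xs e) xss)"
  by (induction xss) auto

lemma sum_list_esum: "(sum_list (map f c) :: ennreal) = esum (\<lambda>m. of_nat (count_list c m) * f m)"
proof (induction c)
  case Nil then show ?case by simp
next
  case (Cons x c)
  have "esum (\<lambda>m. of_nat (count_list (x # c) m) * f m) =
     esum (\<lambda>m. (if m = x then f m else 0) + of_nat (count_list c m) * f m)"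
    by (rule esum_cong) (auto simp: distrib_right)
  also have "\<dots> = f x + sum_list (map f c)" by (simp add: esum_add esum_delta Cons.IH)
  finally show ?case by simp
qed

lemma map_fst_edges: "map fst (edges xs) = butlast xs"
  unfolding edges_def by (simp add: map_fst_zip_take butlast_conv_take)

lemma map_snd_edges: "map snd (edges xs) = tl xs"
  unfolding edges_def by (simp add: map_snd_zip_take)

lemma esum_count_list_out: "esum (\<lambda>y. of_nat (count_list ps (x,y))) = of_nat (count_list (map fst ps) x)"
proof (induction ps)
  case (Cons p ps)
  have "esum (\<lambda>y. of_nat (count_list (p # ps) (x,y))) =
      esum (\<lambda>y. (if y = snd p then (if fst p = x then 1 else 0) else 0) + of_nat (count_list ps (x,y)))"
    by (rule esum_cong) (auto simp: prod_eq_iff)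
  then show ?case by (simp add: esum_add esum_delta Cons.IH)
qed simp

lemma esum_count_list_in: "esum (\<lambda>y. of_nat (count_list ps (y,x))) = of_nat (count_list (map snd ps) x)"
proof (induction ps)
  case (Cons p ps)
  have "esum (\<lambda>y. of_nat (count_list (p # ps) (y,x))) =
      esum (\<lambda>y. (if y = fst p then (if snd p = x then 1 else 0) else 0) + of_nat (count_list ps (y,x)))"
    by (rule esum_cong) (auto simp: prod_eq_iff)
  then show ?case by (simp add: esum_add esum_delta Cons.IH)
qed simp

lemma esum_path_flow_out:
  assumes "distinct xs"
  shows "esum (\<lambda>y. ennreal (path_flow xs (x,y))) = (if x \<in> set xs \<and> x \<noteq> last xs then 1 else 0)"
proof -
  have "x \<in> set (butlast xs) \<longleftrightarrow> x \<in> set xs \<and> x \<noteq> last xs"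
    using assms by (cases xs rule: rev_exhaust) auto
  then show ?thesis
    using assms by (simp add: path_flow_count_list ennreal_of_nat_eq_real_of_nat[symmetric]
        esum_count_list_out map_fst_edges count_list_distinct distinct_butlast)
qed

lemma esum_path_flow_in:
  assumes "distinct xs"
  shows "esum (\<lambda>y. ennreal (path_flow xs (y,x))) = (if x \<in> set xs \<and> x \<noteq> hd xs then 1 else 0)"
proof -
  have "x \<in> set (tl xs) \<longleftrightarrow> x \<in> set xs \<and> x \<noteq> hd xs"
    using assms by (cases xs) auto
  then show ?thesis
    using assms by (simp add: path_flow_count_list ennreal_of_nat_eq_real_of_nat[symmetric]
        esum_count_list_in map_snd_edges count_list_distinct distinct_tl)
qed

fun concat_paths :: "(nat \<Rightarrow> 'v list) \<Rightarrow> nat list \<Rightarrow> 'v list" where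
  "concat_paths \<gamma> [] = []" | "concat_paths \<gamma> [m] = \<gamma> m" | "concat_paths \<gamma> (m # m' # r) = butlast (\<gamma> m) @ concat_paths \<gamma> (m' # r)"

lemma concat_paths_linked:
  assumes "c \<noteq> []" "\<forall>m\<in>set c. 2 \<le> length (\<gamma> m)"
    and "successively (\<lambda>m m'. last (\<gamma> m) = hd (\<gamma> m')) c"
  shows "hd (concat_paths \<gamma> c) = hd (\<gamma> (hd c)) \<and> last (concat_paths \<gamma> c) = last (\<gamma> (last c)) \<and>
    set (concat_paths \<gamma> c) \<subseteq> (\<Union>m\<in>set c. set (\<gamma> m)) \<and>
    edges (concat_paths \<gamma> c) = concat (map (\<lambda>m. edges (\<gamma> m)) c) \<and> 2 \<le> length (concat_paths \<gamma> c)"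
  using assms
proof (induction c rule: induct_list012)
  case (3 m m' r)
  define L where "L = concat_paths \<gamma> (m' # r)"
  have IH: "hd L = hd (\<gamma> m') \<and> last L = last (\<gamma> (last (m' # r))) \<and>
      set L \<subseteq> (\<Union>k\<in>set (m' # r). set (\<gamma> k)) \<and>
      edges L = concat (map (\<lambda>k. edges (\<gamma> k)) (m' # r)) \<and> 2 \<le> length L"
    using "3.IH"(2) "3.prems" unfolding L_def by simp
  have link: "last (\<gamma> m) = hd L" and "L \<noteq> []" using "3.prems" IH by auto
  have "2 \<le> length (\<gamma> m)" using "3.prems" by simp
  then have "butlast (\<gamma> m) \<noteq> []" "\<gamma> m \<noteq> []" by (auto simp flip: length_0_conv)
  moreover have "hd (butlast (\<gamma> m)) = hd (\<gamma> m)" using calculation by (cases "\<gamma> m") auto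
  ultimately show ?case
    using IH edges_butlast_append[of "\<gamma> m" L] link \<open>L \<noteq> []\<close>
    by (auto simp: L_def hd_append dest: in_set_butlastD)
qed simp_all

locale flow_decomposition =
  fixes V :: "'v set" and E :: "('v \<times> 'v) set" and \<mu>1 \<mu>2 :: "'v \<Rightarrow> real" and Q :: "'v \<times> 'v \<Rightarrow> real"
    and \<gamma> :: "nat \<Rightarrow> 'v list" and q :: "nat \<Rightarrow> real"
  assumes prob_\<mu>1: "prob_fun V \<mu>1" and prob_\<mu>2: "prob_fun V \<mu>2"
    and q_nonneg: "\<And>n. 0 \<le> q n" and sa_path: "\<And>n. sa_dpath V E (\<gamma> n)"
    and summable_q: "summable q"
    and Q_sums: "\<And>e. e \<in> E \<Longrightarrow> (\<lambda>n. q n * path_flow (\<gamma> n) e) sums Q e"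
    and acyclic_Q: "acyclic_flow E Q"
    and div_Q: "\<And>x. x \<in> V \<Longrightarrow> divergence E Q x = \<mu>1 x - \<mu>2 x"
begin

text \<open>Paths with a single vertex carry no flow and are discarded.\<close>
definition "used = {n. 0 < q n \<and> 2 \<le> length (\<gamma> n)}"
definition "src n = hd (\<gamma> n)"
definition "tgt n = last (\<gamma> n)"
definition "out_mass x = (\<Sum>n. if n \<in> used \<and> src n = x then q n else 0)"
definition "in_mass x = (\<Sum>n. if n \<in> used \<and> tgt n = x then q n else 0)"
definition "max_mass x = max (out_mass x) (in_mass x)"
definition "excess x = max (\<mu>1 x - \<mu>2 x) 0"
definition "deficit x = max (\<mu>2 x - \<mu>1 x) 0"
definition "pos_edges = {e \<in> E. 0 < Q e}"

lemma distinct_path: "distinct (\<gamma> n)" using sa_path[of n] by (simp add: sa_dpath_def)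
lemma path_nonempty: "\<gamma> n \<noteq> []" using sa_path[of n] by (simp add: sa_dpath_def dpath_def)
lemma set_path_subset: "set (\<gamma> n) \<subseteq> V" using sa_path[of n] by (simp add: sa_dpath_def dpath_def)
lemma edges_path_subset: "set (edges (\<gamma> n)) \<subseteq> E" using sa_path[of n] by (simp add: sa_dpath_def dpath_iff_edges)

lemma summable_bounded_by_q: "(\<And>n. 0 \<le> f n \<and> f n \<le> q n) \<Longrightarrow> summable f"
  by (rule summable_comparison_test[OF _ summable_q]) auto

lemma summable_q_if: "summable (\<lambda>n. if P n then q n else 0)"
  by (rule summable_bounded_by_q) (auto simp: q_nonneg)

lemma esum_q_if: "esum (\<lambda>n. ennreal (if P n then q n else 0)) = ennreal (\<Sum>n. if P n then q n else 0)"
  by (rule esum_ennreal_suminf) (auto simp: q_nonneg summable_q_if)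

lemma Q_esum: "e \<in> E \<Longrightarrow> ennreal (Q e) = esum (\<lambda>n. ennreal (q n * path_flow (\<gamma> n) e))"
proof -
  assume e: "e \<in> E"
  have sm: "summable (\<lambda>n. q n * path_flow (\<gamma> n) e)" using Q_sums[OF e] by (simp add: sums_iff)
  have "Q e = (\<Sum>n. q n * path_flow (\<gamma> n) e)" using Q_sums[OF e] by (simp add: sums_iff)
  then show ?thesis by (simp add: esum_ennreal_suminf sm q_nonneg path_flow_nonneg)
qed

lemma Q_nonneg: "e \<in> E \<Longrightarrow> 0 \<le> Q e"
  by (rule sums_le[OF _ sums_zero Q_sums]) (auto simp: q_nonneg path_flow_nonneg)

lemma q_le_Q: assumes "n \<in> used" "e \<in> set (edges (\<gamma> n))" shows "q n \<le> Q e"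
proof -
  have e: "e \<in> E" using edges_path_subset assms(2) by auto
  have sm: "summable (\<lambda>n. q n * path_flow (\<gamma> n) e)" using Q_sums[OF e] by (simp add: sums_iff)
  have "q n = (\<Sum>k\<in>{n}. q k * path_flow (\<gamma> k) e)" using assms(2) by (simp add: path_flow_edges)
  also have "\<dots> \<le> (\<Sum>k. q k * path_flow (\<gamma> k) e)"
    by (rule sum_le_suminf[OF sm]) (auto simp: q_nonneg path_flow_nonneg)
  also have "\<dots> = Q e" using Q_sums[OF e] by (simp add: sums_iff)
  finally show ?thesis .
qed

lemma edges_pos_edges: assumes "n \<in> used" shows "set (edges (\<gamma> n)) \<subseteq> pos_edges"
proof
  fix e assume e: "e \<in> set (edges (\<gamma> n))"
  then have "e \<in> E" using edges_path_subset by auto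
  moreover have "q n \<le> Q e" by (rule q_le_Q[OF assms e])
  moreover have "0 < q n" using assms by (simp add: used_def)
  ultimately show "e \<in> pos_edges" by (simp add: pos_edges_def)
qed

lemma acyclic_pos_edges: "acyclic pos_edges" using acyclic_Q by (simp add: acyclic_flow_def pos_edges_def)

lemma src_neq_tgt: "n \<in> used \<Longrightarrow> src n \<noteq> tgt n"
  using hd_neq_last_if_distinct[OF distinct_path] by (simp add: used_def src_def tgt_def)

lemma out_mass_ge: "n \<in> used \<Longrightarrow> q n \<le> out_mass (src n)"
proof -
  assume n: "n \<in> used"
  have "q n = (\<Sum>k\<in>{n}. if k \<in> used \<and> src k = src n then q k else 0)" using n by simp
  also have "\<dots> \<le> out_mass (src n)" unfolding out_mass_def by (rule sum_le_suminf[OF summable_q_if]) (auto simp: q_nonneg)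
  finally show ?thesis .
qed

lemma in_mass_ge: "n \<in> used \<Longrightarrow> q n \<le> in_mass (tgt n)"
proof -
  assume n: "n \<in> used"
  have "q n = (\<Sum>k\<in>{n}. if k \<in> used \<and> tgt k = tgt n then q k else 0)" using n by simp
  also have "\<dots> \<le> in_mass (tgt n)" unfolding in_mass_def by (rule sum_le_suminf[OF summable_q_if]) (auto simp: q_nonneg)
  finally show ?thesis .
qed

lemma out_mass_nonneg: "0 \<le> out_mass x" unfolding out_mass_def by (rule suminf_nonneg[OF summable_q_if]) (auto simp: q_nonneg)
lemma in_mass_nonneg: "0 \<le> in_mass x" unfolding in_mass_def by (rule suminf_nonneg[OF summable_q_if]) (auto simp: q_nonneg)

lemma path_flow_not_edge: "e \<notin> E \<Longrightarrow> path_flow (\<gamma> n) e = 0"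
  using edges_path_subset[of n] by (auto simp: path_flow_edges)

lemma summable_q_mult_if: "summable (\<lambda>n. q n * (if P n then 1 else 0))"
  by (rule summable_bounded_by_q) (auto simp: q_nonneg)

lemma has_sum_out_flow:
  "((\<lambda>y. Q (x,y)) has_sum (\<Sum>n. q n * (if x \<in> set (\<gamma> n) \<and> x \<noteq> last (\<gamma> n) then 1 else 0))) {y. (x,y) \<in> E}"
proof -
  have "esum (\<lambda>y. if y \<in> {y. (x,y) \<in> E} then ennreal (Q (x,y)) else 0) =
      esum (\<lambda>y. esum (\<lambda>n. ennreal (q n) * ennreal (path_flow (\<gamma> n) (x,y))))"
    by (intro esum_cong) (auto simp: Q_esum ennreal_mult q_nonneg path_flow_nonneg path_flow_not_edge)
  also have "\<dots> = esum (\<lambda>n. ennreal (q n) * esum (\<lambda>y. ennreal (path_flow (\<gamma> n) (x,y))))"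
    by (subst esum_swap) (simp add: esum_cmult_left)
  also have "\<dots> = esum (\<lambda>n. ennreal (q n * (if x \<in> set (\<gamma> n) \<and> x \<noteq> last (\<gamma> n) then 1 else 0)))"
    by (rule esum_cong) (simp add: esum_path_flow_out distinct_path)
  also have "\<dots> = ennreal (\<Sum>n. q n * (if x \<in> set (\<gamma> n) \<and> x \<noteq> last (\<gamma> n) then 1 else 0))"
    by (rule esum_ennreal_suminf) (auto simp: q_nonneg summable_q_mult_if)
  finally show ?thesis
    by (rule has_sum_if_esum[rotated]) (auto simp: Q_nonneg q_nonneg intro!: suminf_nonneg summable_q_mult_if)
qed

lemma has_sum_in_flow:
  "((\<lambda>y. Q (y,x)) has_sum (\<Sum>n. q n * (if x \<in> set (\<gamma> n) \<and> x \<noteq> hd (\<gamma> n) then 1 else 0))) {y. (y,x) \<in> E}"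
proof -
  have "esum (\<lambda>y. if y \<in> {y. (y,x) \<in> E} then ennreal (Q (y,x)) else 0) =
      esum (\<lambda>y. esum (\<lambda>n. ennreal (q n) * ennreal (path_flow (\<gamma> n) (y,x))))"
    by (intro esum_cong) (auto simp: Q_esum ennreal_mult q_nonneg path_flow_nonneg path_flow_not_edge)
  also have "\<dots> = esum (\<lambda>n. ennreal (q n) * esum (\<lambda>y. ennreal (path_flow (\<gamma> n) (y,x))))"
    by (subst esum_swap) (simp add: esum_cmult_left)
  also have "\<dots> = esum (\<lambda>n. ennreal (q n * (if x \<in> set (\<gamma> n) \<and> x \<noteq> hd (\<gamma> n) then 1 else 0)))"
    by (rule esum_cong) (simp add: esum_path_flow_in distinct_path)
  also have "\<dots> = ennreal (\<Sum>n. q n * (if x \<in> set (\<gamma> n) \<and> x \<noteq> hd (\<gamma> n) then 1 else 0))"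
    by (rule esum_ennreal_suminf) (auto simp: q_nonneg summable_q_mult_if)
  finally show ?thesis
    by (rule has_sum_if_esum[rotated]) (auto simp: Q_nonneg q_nonneg intro!: suminf_nonneg summable_q_mult_if)
qed

lemma path_divergence: "q n * (if x \<in> set (\<gamma> n) \<and> x \<noteq> last (\<gamma> n) then 1 else 0) - q n * (if x \<in> set (\<gamma> n) \<and> x \<noteq> hd (\<gamma> n) then 1 else 0)
  = (if n \<in> used \<and> src n = x then q n else 0) - (if n \<in> used \<and> tgt n = x then q n else 0)"
proof (cases "q n = 0")
  case True then show ?thesis by simp
next
  case False
  then have pos: "0 < q n" using q_nonneg[of n] by simp
  show ?thesis
  proof (cases "2 \<le> length (\<gamma> n)")
    case True
    then have n: "n \<in> used" using pos by (simp add: used_def)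
    have "hd (\<gamma> n) \<in> set (\<gamma> n)" "last (\<gamma> n) \<in> set (\<gamma> n)" using path_nonempty[of n] by auto
    then show ?thesis using n src_neq_tgt[OF n] by (auto simp: src_def tgt_def)
  next
    case False
    then obtain v where "\<gamma> n = [v]" using path_nonempty[of n] False by (cases "\<gamma> n") (auto simp: Suc_le_eq)
    then show ?thesis using False by (auto simp: used_def)
  qed
qed

lemma divergence_masses: assumes "x \<in> V" shows "\<mu>1 x - \<mu>2 x = out_mass x - in_mass x"
proof -
  have "\<mu>1 x - \<mu>2 x = (\<Sum>n. q n * (if x \<in> set (\<gamma> n) \<and> x \<noteq> last (\<gamma> n) then 1 else 0)) -
      (\<Sum>n. q n * (if x \<in> set (\<gamma> n) \<and> x \<noteq> hd (\<gamma> n) then 1 else 0))"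
    using div_Q[OF assms] by (simp add: divergence_def infsumI[OF has_sum_out_flow] infsumI[OF has_sum_in_flow])
  also have "\<dots> = (\<Sum>n. q n * (if x \<in> set (\<gamma> n) \<and> x \<noteq> last (\<gamma> n) then 1 else 0) - q n * (if x \<in> set (\<gamma> n) \<and> x \<noteq> hd (\<gamma> n) then 1 else 0))"
    by (subst suminf_diff) (auto intro: summable_q_mult_if)
  also have "\<dots> = (\<Sum>n. (if n \<in> used \<and> src n = x then q n else 0) - (if n \<in> used \<and> tgt n = x then q n else 0))"
    by (simp only: path_divergence)
  also have "\<dots> = out_mass x - in_mass x" unfolding out_mass_def in_mass_def
    by (subst suminf_diff) (auto intro: summable_q_if)
  finally show ?thesis .
qed

text \<open>Since out_mass - in_mass = \<mu>1 - \<mu>2, both out_mass + deficit and in_mass + excess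
  equal max_mass: this makes \<open>jump\<close>/\<open>stop\<close> stochastic and \<open>occ\<close> balanced.\<close>
definition "jump n m = ennreal (if n \<in> used \<and> m \<in> used \<and> tgt n = src m then q m / max_mass (src m) else 0)"
definition "entry m = ennreal (if m \<in> used then q m * excess (src m) / max_mass (src m) else 0)"
definition "stop n = ennreal (if n \<in> used then deficit (tgt n) / max_mass (tgt n) else 0)"
definition "occ n = ennreal (if n \<in> used then q n else 0)"

lemma src_in_V: "src n \<in> V" using set_path_subset[of n] path_nonempty[of n] by (auto simp: src_def)
lemma tgt_in_V: "tgt n \<in> V" using set_path_subset[of n] path_nonempty[of n] by (auto simp: tgt_def)

lemma max_mass_src_pos: "n \<in> used \<Longrightarrow> 0 < max_mass (src n)"
  using out_mass_ge[of n] by (auto simp: max_mass_def used_def)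
lemma max_mass_tgt_pos: "n \<in> used \<Longrightarrow> 0 < max_mass (tgt n)"
  using in_mass_ge[of n] by (auto simp: max_mass_def used_def)

lemma out_mass_deficit: "x \<in> V \<Longrightarrow> out_mass x + deficit x = max_mass x"
  using divergence_masses[of x] by (auto simp: deficit_def max_mass_def)
lemma in_mass_excess: "x \<in> V \<Longrightarrow> in_mass x + excess x = max_mass x"
  using divergence_masses[of x] by (auto simp: excess_def max_mass_def)

lemma esum_out_mass: "esum (\<lambda>m. ennreal (if m \<in> used \<and> src m = x then q m else 0)) = ennreal (out_mass x)"
  unfolding out_mass_def by (rule esum_q_if)
lemma esum_in_mass: "esum (\<lambda>m. ennreal (if m \<in> used \<and> tgt m = x then q m else 0)) = ennreal (in_mass x)"
  unfolding in_mass_def by (rule esum_q_if)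

lemma max_mass_nonneg: "0 \<le> max_mass x" using out_mass_nonneg by (simp add: max_mass_def le_max_iff_disj)
lemma excess_nonneg: "0 \<le> excess x" by (simp add: excess_def)
lemma deficit_nonneg: "0 \<le> deficit x" by (simp add: deficit_def)

lemma jump_stoch: assumes n: "n \<in> used" shows "esum (jump n) + stop n = 1"
proof -
  let ?x = "tgt n"
  have M: "0 < max_mass ?x" using max_mass_tgt_pos[OF n] .
  have "jump n m = ennreal (1 / max_mass ?x) * ennreal (if m \<in> used \<and> src m = ?x then q m else 0)" for m
    using n M by (auto simp: jump_def ennreal_mult[symmetric] q_nonneg)
  then have "esum (jump n) = esum (\<lambda>m. ennreal (1 / max_mass ?x) * ennreal (if m \<in> used \<and> src m = ?x then q m else 0))"
    by (intro esum_cong) simp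
  then have "esum (jump n) = ennreal (1 / max_mass ?x) * ennreal (out_mass ?x)"
    by (simp add: esum_cmult_left esum_out_mass)
  also have "\<dots> = ennreal (out_mass ?x / max_mass ?x)" using M by (simp add: ennreal_mult[symmetric] out_mass_nonneg)
  finally have "esum (jump n) + stop n = ennreal (out_mass ?x / max_mass ?x) + ennreal (deficit ?x / max_mass ?x)"
    using n by (simp add: stop_def)
  also have "\<dots> = ennreal ((out_mass ?x + deficit ?x) / max_mass ?x)"
    using M by (simp add: ennreal_plus[symmetric] out_mass_nonneg deficit_nonneg add_divide_distrib del: ennreal_plus)
  also have "\<dots> = 1" using out_mass_deficit[OF tgt_in_V] M by simp
  finally show ?thesis .
qed

lemma occ_balance: "occ m = entry m + esum (\<lambda>n. occ n * jump n m)"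
proof (cases "m \<in> used")
  case False
  then show ?thesis by (simp add: occ_def entry_def jump_def)
next
  case m: True
  let ?x = "src m"
  have M: "0 < max_mass ?x" using max_mass_src_pos[OF m] .
  have "occ n * jump n m = ennreal (q m / max_mass ?x) * ennreal (if n \<in> used \<and> tgt n = ?x then q n else 0)" for n
    using m M by (auto simp: jump_def occ_def ennreal_mult[symmetric] q_nonneg)
  then have "esum (\<lambda>n. occ n * jump n m) = ennreal (q m / max_mass ?x) * ennreal (in_mass ?x)"
    by (simp add: esum_cmult_left esum_in_mass)
  also have "\<dots> = ennreal (q m * in_mass ?x / max_mass ?x)" using M by (simp add: ennreal_mult[symmetric] in_mass_nonneg q_nonneg)
  finally have "entry m + esum (\<lambda>n. occ n * jump n m) = ennreal (q m * excess ?x / max_mass ?x) + ennreal (q m * in_mass ?x / max_mass ?x)"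
    using m by (simp add: entry_def)
  also have "\<dots> = ennreal (q m * (in_mass ?x + excess ?x) / max_mass ?x)"
    using M by (simp add: ennreal_plus[symmetric] in_mass_nonneg excess_nonneg q_nonneg add_divide_distrib distrib_left del: ennreal_plus)
  also have "\<dots> = occ m" using in_mass_excess[OF src_in_V] M m by (simp add: occ_def)
  finally show ?thesis by simp
qed

lemma esum_occ_finite: "esum occ \<noteq> \<infinity>"
proof -
  have "occ = (\<lambda>n. ennreal (if n \<in> used then q n else 0))" by (rule ext) (simp add: occ_def)
  then show ?thesis using esum_q_if[of "\<lambda>n. n \<in> used"] by simp
qed

lemma jump_nonzero: "jump n m \<noteq> 0 \<Longrightarrow> n \<in> used \<and> m \<in> used \<and> tgt n = src m"
  by (auto simp: jump_def split: if_splits)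

lemma src_tgt_trancl: "n \<in> used \<Longrightarrow> (src n, tgt n) \<in> pos_edges\<^sup>+"
  using hd_last_trancl_if_edges[OF edges_pos_edges] by (auto simp: src_def tgt_def used_def)

lemma acyclic_jump: "acyclic {(n,m). jump n m \<noteq> 0}"
proof -
  have key: "(n,m) \<in> {(n,m). jump n m \<noteq> 0}\<^sup>+ \<Longrightarrow> (src n, src m) \<in> pos_edges\<^sup>+" for n m
  proof (induction rule: trancl_induct)
    case (base m)
    then show ?case using jump_nonzero src_tgt_trancl by force
  next
    case (step m l)
    then have "m \<in> used" "tgt m = src l" using jump_nonzero by auto
    then show ?case using step.IH src_tgt_trancl by (metis (no_types, lifting) trancl_trans)
  qed
  show ?thesis unfolding acyclic_def using key acyclic_pos_edges by (auto simp: acyclic_def)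
qed

sublocale C: killed_chain used jump entry stop occ
proof
  show "\<And>n m. n \<notin> used \<or> m \<notin> used \<Longrightarrow> jump n m = 0" by (auto simp: jump_def)
  show "\<And>n. n \<notin> used \<Longrightarrow> entry n = 0" by (simp add: entry_def)
  show "\<And>n. n \<in> used \<Longrightarrow> esum (jump n) + stop n = 1" by (rule jump_stoch)
  show "\<And>m. occ m = entry m + esum (\<lambda>n. occ n * jump n m)" by (rule occ_balance)
  show "esum occ \<noteq> \<infinity>" by (rule esum_occ_finite)
  show "acyclic {(n,m). jump n m \<noteq> 0}" by (rule acyclic_jump)
qed

definition "chain_src c = src (hd c)"
definition "chain_tgt c = tgt (last c)"

lemma walk_weight_jump_nonzero:
  "walk_weight jump c \<noteq> 0 \<Longrightarrow> hd c \<in> used \<Longrightarrow>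
    set c \<subseteq> used \<and> successively (\<lambda>m m'. last (\<gamma> m) = hd (\<gamma> m')) c"
  by (induction c rule: induct_list012) (auto dest!: jump_nonzero simp: src_def tgt_def)

lemma chain_weight_nonzero:
  assumes "C.chain_weight c \<noteq> 0"
  shows "c \<noteq> [] \<and> set c \<subseteq> used \<and> successively (\<lambda>m m'. last (\<gamma> m) = hd (\<gamma> m')) c"
proof -
  have c: "c \<noteq> []" using assms by (auto simp: C.chain_weight_def)
  then have "entry (hd c) \<noteq> 0" "walk_weight jump c \<noteq> 0" using assms by (auto simp: C.chain_weight_def)
  then show ?thesis using c walk_weight_jump_nonzero by (auto simp: entry_def split: if_splits)
qed

lemma concat_paths_good:
  assumes "C.chain_weight c \<noteq> 0"
  shows "dpath V E (concat_paths \<gamma> c)" "distinct (concat_paths \<gamma> c)"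
    "hd (concat_paths \<gamma> c) = chain_src c" "last (concat_paths \<gamma> c) = chain_tgt c"
    "chain_src c \<noteq> chain_tgt c" "chain_src c \<in> V" "chain_tgt c \<in> V"
    "edges (concat_paths \<gamma> c) = concat (map (\<lambda>m. edges (\<gamma> m)) c)"
proof -
  have c: "c \<noteq> []" "set c \<subseteq> used" "successively (\<lambda>m m'. last (\<gamma> m) = hd (\<gamma> m')) c"
    using chain_weight_nonzero[OF assms] by auto
  then have "\<forall>m\<in>set c. 2 \<le> length (\<gamma> m)" by (auto simp: used_def)
  note P = concat_paths_linked[OF c(1) this c(3)]
  show edges: "edges (concat_paths \<gamma> c) = concat (map (\<lambda>m. edges (\<gamma> m)) c)" using P by blast
  have sub: "set (edges (concat_paths \<gamma> c)) \<subseteq> pos_edges"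
    using edges_pos_edges c(2) by (auto simp: edges)
  show dc: "distinct (concat_paths \<gamma> c)" by (rule distinct_if_edges_acyclic[OF sub acyclic_pos_edges])
  have "set (concat_paths \<gamma> c) \<subseteq> V" using P set_path_subset by blast
  moreover have "pos_edges \<subseteq> E" by (auto simp: pos_edges_def)
  ultimately show "dpath V E (concat_paths \<gamma> c)" using P sub unfolding dpath_iff_edges by auto
  show h: "hd (concat_paths \<gamma> c) = chain_src c" and l: "last (concat_paths \<gamma> c) = chain_tgt c"
    using P by (simp_all add: chain_src_def chain_tgt_def src_def tgt_def)
  show "chain_src c \<in> V" "chain_tgt c \<in> V" by (simp_all add: chain_src_def chain_tgt_def src_in_V tgt_in_V)
  show "chain_src c \<noteq> chain_tgt c"
    using hd_neq_last_if_distinct[OF dc] P h l by simp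
qed

lemma path_flow_concat_paths:
  assumes "C.chain_weight c \<noteq> 0"
  shows "ennreal (path_flow (concat_paths \<gamma> c) e) = esum (\<lambda>m. of_nat (count_list c m) * ennreal (path_flow (\<gamma> m) e))"
proof -
  have "path_flow (concat_paths \<gamma> c) e = real (count_list (edges (concat_paths \<gamma> c)) e)"
    by (rule path_flow_count_list[OF concat_paths_good(2)[OF assms]])
  also have "\<dots> = real (sum_list (map (\<lambda>m. count_list (edges (\<gamma> m)) e) c))"
    by (simp add: concat_paths_good(8)[OF assms] count_list_concat o_def)
  finally have "ennreal (path_flow (concat_paths \<gamma> c) e) = of_nat (sum_list (map (\<lambda>m. count_list (edges (\<gamma> m)) e) c))"
    by (simp add: ennreal_of_nat_eq_real_of_nat)
  also have "\<dots> = sum_list (map (\<lambda>m. of_nat (count_list (edges (\<gamma> m)) e)) c)"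
    by (simp add: sum_list_of_nat[symmetric] o_def)
  also have "\<dots> = esum (\<lambda>m. of_nat (count_list c m) * of_nat (count_list (edges (\<gamma> m)) e))"
    by (rule sum_list_esum)
  also have "\<dots> = esum (\<lambda>m. of_nat (count_list c m) * ennreal (path_flow (\<gamma> m) e))"
    by (simp add: path_flow_count_list distinct_path ennreal_of_nat_eq_real_of_nat)
  finally show ?thesis .
qed

lemma q_path_flow_outside_used: "n \<notin> used \<Longrightarrow> q n * path_flow (\<gamma> n) e = 0"
proof -
  assume n: "n \<notin> used"
  show ?thesis
  proof (cases "q n = 0")
    case False
    then have "length (\<gamma> n) < 2" using n q_nonneg[of n] by (auto simp: used_def)
    then show ?thesis by (simp add: path_flow_edges edges_short)
  qed simp
qed

lemma Q_esum_chains: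
  assumes e: "e \<in> E"
  shows "ennreal (Q e) = esum (\<lambda>c. C.chain_weight c * ennreal (path_flow (concat_paths \<gamma> c) e))"
proof -
  have "ennreal (Q e) = esum (\<lambda>n. occ n * ennreal (path_flow (\<gamma> n) e))"
    unfolding Q_esum[OF e]
  proof (rule esum_cong)
    fix n show "ennreal (q n * path_flow (\<gamma> n) e) = occ n * ennreal (path_flow (\<gamma> n) e)"
      using q_path_flow_outside_used[of n e] by (cases "n \<in> used") (auto simp: occ_def ennreal_mult q_nonneg path_flow_nonneg)
  qed
  also have "\<dots> = esum (\<lambda>n. esum (\<lambda>c. C.chain_weight c * (of_nat (count_list c n) * ennreal (path_flow (\<gamma> n) e))))"
    by (simp add: C.esum_chain_weight_count[symmetric] esum_cmult_right[symmetric] mult.assoc)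
  also have "\<dots> = esum (\<lambda>c. C.chain_weight c * esum (\<lambda>n. of_nat (count_list c n) * ennreal (path_flow (\<gamma> n) e)))"
    by (subst esum_swap) (simp add: esum_cmult_left)
  also have "\<dots> = esum (\<lambda>c. C.chain_weight c * ennreal (path_flow (concat_paths \<gamma> c) e))"
  proof (rule esum_cong)
    fix c show "C.chain_weight c * esum (\<lambda>n. of_nat (count_list c n) * ennreal (path_flow (\<gamma> n) e)) =
        C.chain_weight c * ennreal (path_flow (concat_paths \<gamma> c) e)"
      by (cases "C.chain_weight c = 0") (simp_all add: path_flow_concat_paths)
  qed
  finally show ?thesis .
qed

lemma chain_weight_Nil: "C.chain_weight [] = 0" by (simp add: C.chain_weight_def)

lemma chain_weight_finite: "C.chain_weight c \<noteq> \<infinity>"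
proof (cases "c = []")
  case True then show ?thesis by (simp add: chain_weight_Nil)
next
  case False
  have "C.chain_weight c \<le> esum (\<lambda>c'. if c' \<noteq> [] \<and> hd c' = hd c then C.chain_weight c' else 0)"
    using esum_upper[of "\<lambda>c'. if c' \<noteq> [] \<and> hd c' = hd c then C.chain_weight c' else 0" c] False by simp
  also have "\<dots> = entry (hd c)" by (rule C.esum_chain_weight_hd)
  finally show ?thesis by (auto simp: entry_def top_unique)
qed

lemma esum_chains_by_end:
  fixes sel :: "nat list \<Rightarrow> nat" and f :: "nat \<Rightarrow> 'v"
  shows "esum (\<lambda>c. if f (sel c) = x then C.chain_weight c else 0) =
    esum (\<lambda>m. if f m = x then esum (\<lambda>c. if c \<noteq> [] \<and> sel c = m then C.chain_weight c else 0) else 0)"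
proof -
  have "esum (\<lambda>c. if f (sel c) = x then C.chain_weight c else 0) =
      esum (\<lambda>c. esum (\<lambda>m. if f m = x then (if c \<noteq> [] \<and> sel c = m then C.chain_weight c else 0) else 0))"
  proof (rule esum_cong)
    fix c
    show "(if f (sel c) = x then C.chain_weight c else 0) =
      esum (\<lambda>m. if f m = x then (if c \<noteq> [] \<and> sel c = m then C.chain_weight c else 0) else 0)"
    proof (cases "c = []")
      case True then show ?thesis by (simp add: chain_weight_Nil cong: if_cong)
    next
      case False
      have "esum (\<lambda>m. if f m = x then (if c \<noteq> [] \<and> sel c = m then C.chain_weight c else 0) else 0) =
          esum (\<lambda>m. if sel c = m then (if f m = x then C.chain_weight c else 0) else 0)"
        using False by (intro esum_cong) auto
      also have "\<dots> = (if f (sel c) = x then C.chain_weight c else 0)" by (rule esum_delta')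
      finally show ?thesis by simp
    qed
  qed
  also have "\<dots> = esum (\<lambda>m. esum (\<lambda>c. if f m = x then (if c \<noteq> [] \<and> sel c = m then C.chain_weight c else 0) else 0))"
    by (rule esum_swap)
  also have "\<dots> = esum (\<lambda>m. if f m = x then esum (\<lambda>c. if c \<noteq> [] \<and> sel c = m then C.chain_weight c else 0) else 0)"
    by (intro esum_cong) auto
  finally show ?thesis .
qed

lemma esum_chain_src: assumes x: "x \<in> V" shows "esum (\<lambda>c. if chain_src c = x then C.chain_weight c else 0) = ennreal (excess x)"
proof -
  have "esum (\<lambda>c. if chain_src c = x then C.chain_weight c else 0) =
      esum (\<lambda>m. if src m = x then esum (\<lambda>c. if c \<noteq> [] \<and> hd c = m then C.chain_weight c else 0) else 0)"
    using esum_chains_by_end[of src hd x] by (simp add: chain_src_def)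
  also have "\<dots> = esum (\<lambda>m. if src m = x then entry m else 0)"
    by (intro esum_cong) (simp add: C.esum_chain_weight_hd)
  also have "\<dots> = esum (\<lambda>m. ennreal (excess x / max_mass x) * ennreal (if m \<in> used \<and> src m = x then q m else 0))"
    by (intro esum_cong) (auto simp: entry_def ennreal_mult[symmetric] excess_nonneg max_mass_nonneg q_nonneg)
  also have "\<dots> = ennreal (excess x / max_mass x * out_mass x)"
    by (simp add: esum_cmult_left esum_out_mass ennreal_mult[symmetric] excess_nonneg max_mass_nonneg out_mass_nonneg)
  also have "excess x / max_mass x * out_mass x = excess x"
  proof (cases "excess x = 0")
    case False
    then have "in_mass x < out_mass x" using divergence_masses[OF x] by (simp add: excess_def)
    then have "max_mass x = out_mass x" "0 < out_mass x" using in_mass_nonneg[of x] by (auto simp: max_mass_def)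
    then show ?thesis by simp
  qed simp
  finally show ?thesis .
qed

lemma esum_chain_tgt: assumes y: "y \<in> V" shows "esum (\<lambda>c. if chain_tgt c = y then C.chain_weight c else 0) = ennreal (deficit y)"
proof -
  have "esum (\<lambda>c. if chain_tgt c = y then C.chain_weight c else 0) =
      esum (\<lambda>m. if tgt m = y then esum (\<lambda>c. if c \<noteq> [] \<and> last c = m then C.chain_weight c else 0) else 0)"
    using esum_chains_by_end[of tgt last y] by (simp add: chain_tgt_def)
  also have "\<dots> = esum (\<lambda>m. if tgt m = y then occ m * stop m else 0)"
    by (intro esum_cong) (simp add: C.esum_chain_weight_last)
  also have "\<dots> = esum (\<lambda>m. ennreal (deficit y / max_mass y) * ennreal (if m \<in> used \<and> tgt m = y then q m else 0))"
    by (intro esum_cong) (auto simp: occ_def stop_def ennreal_mult[symmetric] deficit_nonneg max_mass_nonneg q_nonneg)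
  also have "\<dots> = ennreal (deficit y / max_mass y * in_mass y)"
    by (simp add: esum_cmult_left esum_in_mass ennreal_mult[symmetric] deficit_nonneg max_mass_nonneg in_mass_nonneg)
  also have "deficit y / max_mass y * in_mass y = deficit y"
  proof (cases "deficit y = 0")
    case False
    then have "out_mass y < in_mass y" using divergence_masses[OF y] by (simp add: deficit_def)
    then have "max_mass y = in_mass y" "0 < in_mass y" using out_mass_nonneg[of y] by (auto simp: max_mass_def)
    then show ?thesis by simp
  qed simp
  finally show ?thesis .
qed

definition "transport x y = esum (\<lambda>c. if chain_src c = x \<and> chain_tgt c = y then C.chain_weight c else 0)"
definition "plan p = (if fst p = snd p then min (\<mu>1 (fst p)) (\<mu>2 (fst p)) else enn2real (transport (fst p) (snd p)))"
text \<open>Trajectories are enumerated via \<open>to_nat\<close>; the pair argument of \<open>index_path\<close> and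
  \<open>index_weight\<close> is irrelevant because the index sets of different pairs are disjoint.\<close>
definition "chain_indices p = to_nat ` {c. C.chain_weight c \<noteq> 0 \<and> chain_src c = fst p \<and> chain_tgt c = snd p}"
definition "index_path (p :: 'v \<times> 'v) i = concat_paths \<gamma> (from_nat i)"
definition "index_weight (p :: 'v \<times> 'v) i = enn2real (C.chain_weight (from_nat i))"
definition "off_diag = {(x,y). x \<in> V \<and> y \<in> V \<and> x \<noteq> y}"

lemma \<mu>1_nonneg: "x \<in> V \<Longrightarrow> 0 \<le> \<mu>1 x" using prob_\<mu>1 by (simp add: prob_fun_def)
lemma \<mu>2_nonneg: "x \<in> V \<Longrightarrow> 0 \<le> \<mu>2 x" using prob_\<mu>2 by (simp add: prob_fun_def)

lemma ennreal_enn2real_chain_weight: "ennreal (enn2real (C.chain_weight c)) = C.chain_weight c"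
  using chain_weight_finite[of c] by (simp add: ennreal_enn2real_if top.not_eq_extremum)

lemma esum_transport_row: assumes x: "x \<in> V"
  shows "esum (\<lambda>y. if y \<in> V \<and> y \<noteq> x then transport x y else 0) = ennreal (excess x)"
proof -
  have "esum (\<lambda>y. if y \<in> V \<and> y \<noteq> x then transport x y else 0) =
     esum (\<lambda>y. esum (\<lambda>c. if y \<in> V \<and> y \<noteq> x \<and> chain_src c = x \<and> chain_tgt c = y then C.chain_weight c else 0))"
    unfolding transport_def by (intro esum_cong) auto
  also have "\<dots> = esum (\<lambda>c. esum (\<lambda>y. if y \<in> V \<and> y \<noteq> x \<and> chain_src c = x \<and> chain_tgt c = y then C.chain_weight c else 0))"
    by (rule esum_swap)
  also have "\<dots> = esum (\<lambda>c. if chain_src c = x then C.chain_weight c else 0)"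
  proof (rule esum_cong)
    fix c
    show "esum (\<lambda>y. if y \<in> V \<and> y \<noteq> x \<and> chain_src c = x \<and> chain_tgt c = y then C.chain_weight c else 0) = (if chain_src c = x then C.chain_weight c else 0)"
    proof (cases "C.chain_weight c = 0")
      case True then show ?thesis by (simp cong: if_cong)
    next
      case False
      have "esum (\<lambda>y. if y \<in> V \<and> y \<noteq> x \<and> chain_src c = x \<and> chain_tgt c = y then C.chain_weight c else 0) =
          esum (\<lambda>y. if y = chain_tgt c then (if chain_src c = x then C.chain_weight c else 0) else 0)"
        using concat_paths_good[OF False] by (intro esum_cong) auto
      then show ?thesis by (simp add: esum_delta)
    qed
  qed
  also have "\<dots> = ennreal (excess x)" by (rule esum_chain_src[OF x])
  finally show ?thesis .
qed

lemma esum_transport_col: assumes y: "y \<in> V"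
  shows "esum (\<lambda>x. if x \<in> V \<and> x \<noteq> y then transport x y else 0) = ennreal (deficit y)"
proof -
  have "esum (\<lambda>x. if x \<in> V \<and> x \<noteq> y then transport x y else 0) =
     esum (\<lambda>x. esum (\<lambda>c. if x \<in> V \<and> x \<noteq> y \<and> chain_src c = x \<and> chain_tgt c = y then C.chain_weight c else 0))"
    unfolding transport_def by (intro esum_cong) auto
  also have "\<dots> = esum (\<lambda>c. esum (\<lambda>x. if x \<in> V \<and> x \<noteq> y \<and> chain_src c = x \<and> chain_tgt c = y then C.chain_weight c else 0))"
    by (rule esum_swap)
  also have "\<dots> = esum (\<lambda>c. if chain_tgt c = y then C.chain_weight c else 0)"
  proof (rule esum_cong)
    fix c
    show "esum (\<lambda>x. if x \<in> V \<and> x \<noteq> y \<and> chain_src c = x \<and> chain_tgt c = y then C.chain_weight c else 0) = (if chain_tgt c = y then C.chain_weight c else 0)"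
    proof (cases "C.chain_weight c = 0")
      case True then show ?thesis by (simp cong: if_cong)
    next
      case False
      have "esum (\<lambda>x. if x \<in> V \<and> x \<noteq> y \<and> chain_src c = x \<and> chain_tgt c = y then C.chain_weight c else 0) =
          esum (\<lambda>x. if x = chain_src c then (if chain_tgt c = y then C.chain_weight c else 0) else 0)"
        using concat_paths_good[OF False] by (intro esum_cong) auto
      then show ?thesis by (simp add: esum_delta)
    qed
  qed
  also have "\<dots> = ennreal (deficit y)" by (rule esum_chain_tgt[OF y])
  finally show ?thesis .
qed

lemma transport_finite: assumes x: "x \<in> V" shows "transport x y \<noteq> \<infinity>"
proof (cases "y \<in> V \<and> y \<noteq> x")
  case True
  have "transport x y \<le> esum (\<lambda>y. if y \<in> V \<and> y \<noteq> x then transport x y else 0)"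
    using esum_upper[of "\<lambda>y. if y \<in> V \<and> y \<noteq> x then transport x y else 0" y] True by simp
  then show ?thesis using esum_transport_row[OF x] by (auto simp: top_unique)
next
  case False
  have "transport x y = 0" unfolding transport_def
  proof (subst esum_eq_0_iff, intro allI)
    fix c show "(if chain_src c = x \<and> chain_tgt c = y then C.chain_weight c else 0) = 0"
      using concat_paths_good(5,7)[of c] False by (cases "C.chain_weight c = 0") auto
  qed
  then show ?thesis by simp
qed

lemma ennreal_enn2real_transport: "x \<in> V \<Longrightarrow> ennreal (enn2real (transport x y)) = transport x y"
  using transport_finite by (simp add: ennreal_enn2real_if top.not_eq_extremum)

lemma plan_nonneg: "x \<in> V \<Longrightarrow> y \<in> V \<Longrightarrow> 0 \<le> plan (x,y)"
  by (simp add: plan_def \<mu>1_nonneg \<mu>2_nonneg)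

lemma esum_plan_row: assumes x: "x \<in> V" shows "esum (\<lambda>y. if y \<in> V then ennreal (plan (x,y)) else 0) = ennreal (\<mu>1 x)"
proof -
  have "esum (\<lambda>y. if y \<in> V then ennreal (plan (x,y)) else 0) =
     esum (\<lambda>y. (if y = x then ennreal (min (\<mu>1 x) (\<mu>2 x)) else 0) + (if y \<in> V \<and> y \<noteq> x then transport x y else 0))"
    using x by (intro esum_cong) (auto simp: plan_def ennreal_enn2real_transport)
  also have "\<dots> = ennreal (min (\<mu>1 x) (\<mu>2 x)) + ennreal (excess x)"
    by (simp add: esum_add esum_delta esum_transport_row[OF x])
  also have "\<dots> = ennreal (\<mu>1 x)" using \<mu>1_nonneg[OF x] \<mu>2_nonneg[OF x]
    by (simp add: ennreal_plus[symmetric] excess_def del: ennreal_plus)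
  finally show ?thesis .
qed

lemma esum_plan_col: assumes y: "y \<in> V" shows "esum (\<lambda>x. if x \<in> V then ennreal (plan (x,y)) else 0) = ennreal (\<mu>2 y)"
proof -
  have "esum (\<lambda>x. if x \<in> V then ennreal (plan (x,y)) else 0) =
     esum (\<lambda>x. (if x = y then ennreal (min (\<mu>1 y) (\<mu>2 y)) else 0) + (if x \<in> V \<and> x \<noteq> y then transport x y else 0))"
    using y by (intro esum_cong) (auto simp: plan_def ennreal_enn2real_transport)
  also have "\<dots> = ennreal (min (\<mu>1 y) (\<mu>2 y)) + ennreal (deficit y)"
    by (simp add: esum_add esum_delta esum_transport_col[OF y])
  also have "\<dots> = ennreal (\<mu>2 y)" using \<mu>1_nonneg[OF y] \<mu>2_nonneg[OF y]
    by (simp add: ennreal_plus[symmetric] deficit_def del: ennreal_plus)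
  finally show ?thesis .
qed

lemma coupling_plan: "coupling V \<mu>1 \<mu>2 plan"
proof -
  have rows: "((\<lambda>y. plan (x,y)) has_sum \<mu>1 x) V" if x: "x \<in> V" for x
    by (rule has_sum_if_esum[OF _ esum_plan_row[OF x]]) (use x plan_nonneg \<mu>1_nonneg \<mu>2_nonneg in auto)
  have cols: "((\<lambda>x. plan (x,y)) has_sum \<mu>2 y) V" if y: "y \<in> V" for y
    by (rule has_sum_if_esum[OF _ esum_plan_col[OF y]]) (use y plan_nonneg \<mu>1_nonneg \<mu>2_nonneg in auto)
  have "esum (\<lambda>p. if p \<in> V \<times> V then ennreal (plan p) else 0) =
      esum (\<lambda>x. esum (\<lambda>y. if (x,y) \<in> V \<times> V then ennreal (plan (x,y)) else 0))"
    by (rule esum_pair[symmetric])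
  also have "\<dots> = esum (\<lambda>x. if x \<in> V then ennreal (\<mu>1 x) else 0)"
    by (intro esum_cong) (auto simp: esum_plan_row)
  also have "\<dots> = ennreal 1"
    by (rule esum_if_has_sum) (use \<mu>1_nonneg prob_\<mu>1 in \<open>auto simp: prob_fun_def\<close>)
  finally have tot: "(plan has_sum 1) (V \<times> V)"
    by (intro has_sum_if_esum) (auto simp: plan_nonneg)
  show ?thesis unfolding coupling_def prob_fun_def using tot rows cols plan_nonneg by auto
qed

lemma excess_le: "x \<in> V \<Longrightarrow> excess x \<le> \<mu>1 x" using \<mu>1_nonneg \<mu>2_nonneg by (simp add: excess_def)
lemma deficit_le: "x \<in> V \<Longrightarrow> deficit x \<le> \<mu>2 x" using \<mu>1_nonneg \<mu>2_nonneg by (simp add: deficit_def)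

lemma has_sum_plan_off_diag: "(plan has_sum ((1/2) * (\<Sum>\<^sub>\<infinity>x\<in>V. \<bar>\<mu>1 x - \<mu>2 x\<bar>))) off_diag"
proof -
  have h1: "(\<mu>1 has_sum 1) V" "(\<mu>2 has_sum 1) V" using prob_\<mu>1 prob_\<mu>2 by (auto simp: prob_fun_def)
  have "excess summable_on V"
    by (rule summable_on_comparison_test[of \<mu>1]) (use h1 excess_le excess_nonneg in \<open>auto simp: summable_on_def\<close>)
  then obtain Ap where hap: "(excess has_sum Ap) V" by (auto simp: summable_on_def)
  have "deficit summable_on V"
    by (rule summable_on_comparison_test[of \<mu>2]) (use h1 deficit_le deficit_nonneg in \<open>auto simp: summable_on_def\<close>)
  then obtain Am where ham: "(deficit has_sum Am) V" by (auto simp: summable_on_def)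
  have d1: "((\<lambda>x. excess x + - deficit x) has_sum (Ap + - Am)) V"
    by (intro has_sum_add has_sum_uminusI hap ham)
  have d2: "((\<lambda>x. \<mu>1 x + - \<mu>2 x) has_sum (1 + - 1)) V"
    by (intro has_sum_add has_sum_uminusI h1)
  have "(\<lambda>x. excess x + - deficit x) = (\<lambda>x. \<mu>1 x + - \<mu>2 x)" by (auto simp: excess_def deficit_def fun_eq_iff)
  then have "Ap + - Am = 1 + - 1" using d1 d2 has_sum_unique by metis
  then have eq: "Ap = Am" by simp
  have "((\<lambda>x. excess x + deficit x) has_sum (Ap + Am)) V" by (intro has_sum_add hap ham)
  moreover have "(\<lambda>x. excess x + deficit x) = (\<lambda>x. \<bar>\<mu>1 x - \<mu>2 x\<bar>)" by (auto simp: excess_def deficit_def fun_eq_iff)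
  ultimately have "(\<Sum>\<^sub>\<infinity>x\<in>V. \<bar>\<mu>1 x - \<mu>2 x\<bar>) = Ap + Am" by (simp add: infsumI)
  then have val: "(1/2) * (\<Sum>\<^sub>\<infinity>x\<in>V. \<bar>\<mu>1 x - \<mu>2 x\<bar>) = Ap" using eq by simp
  have Ap_nn: "0 \<le> Ap" using hap excess_nonneg has_sum_nonneg by blast
  have "esum (\<lambda>p. if p \<in> off_diag then ennreal (plan p) else 0) =
      esum (\<lambda>x. esum (\<lambda>y. if (x,y) \<in> off_diag then ennreal (plan (x,y)) else 0))"
    by (rule esum_pair[symmetric])
  also have "\<dots> = esum (\<lambda>x. if x \<in> V then esum (\<lambda>y. if y \<in> V \<and> y \<noteq> x then transport x y else 0) else 0)"
  proof (rule esum_cong)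
    fix x show "esum (\<lambda>y. if (x,y) \<in> off_diag then ennreal (plan (x,y)) else 0) =
      (if x \<in> V then esum (\<lambda>y. if y \<in> V \<and> y \<noteq> x then transport x y else 0) else 0)"
      by (cases "x \<in> V") (auto simp: off_diag_def plan_def ennreal_enn2real_transport intro!: esum_cong)
  qed
  also have "\<dots> = esum (\<lambda>x. if x \<in> V then ennreal (excess x) else 0)"
    by (intro esum_cong) (simp add: esum_transport_row)
  also have "\<dots> = ennreal Ap" by (rule esum_if_has_sum[OF _ hap]) (simp add: excess_nonneg)
  finally have "(plan has_sum Ap) off_diag"
    by (intro has_sum_if_esum[OF _ _ Ap_nn]) (auto simp: off_diag_def plan_nonneg)
  then show ?thesis using val by simp
qed

lemma chain_indices_mem: "i \<in> chain_indices p \<Longrightarrow> C.chain_weight (from_nat i) \<noteq> 0 \<and> chain_src (from_nat i) = fst p \<and> chain_tgt (from_nat i) = snd p"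
  unfolding chain_indices_def by auto

lemma chain_paths:
  assumes xy: "x \<in> V" "y \<in> V" "x \<noteq> y"
  shows "(\<forall>i\<in>chain_indices (x,y). dpath V E (index_path (x,y) i) \<and> hd (index_path (x,y) i) = x \<and> last (index_path (x,y) i) = y \<and> index_weight (x,y) i \<ge> 0) \<and>
     (index_weight (x,y) has_sum plan (x,y)) (chain_indices (x,y))"
proof
  show "\<forall>i\<in>chain_indices (x,y). dpath V E (index_path (x,y) i) \<and> hd (index_path (x,y) i) = x \<and> last (index_path (x,y) i) = y \<and> index_weight (x,y) i \<ge> 0"
  proof
    fix i assume i: "i \<in> chain_indices (x,y)"
    note m = chain_indices_mem[OF i]
    then show "dpath V E (index_path (x,y) i) \<and> hd (index_path (x,y) i) = x \<and> last (index_path (x,y) i) = y \<and> index_weight (x,y) i \<ge> 0"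
      using concat_paths_good(1,3,4)[of "from_nat i"] by (simp add: index_path_def index_weight_def)
  qed
  have "esum (\<lambda>i. if i \<in> chain_indices (x,y) then ennreal (index_weight (x,y) i) else 0) =
      esum (\<lambda>c::nat list. (\<lambda>i. if i \<in> chain_indices (x,y) then ennreal (index_weight (x,y) i) else 0) (to_nat c))"
    by (rule esum_reindex[symmetric]) (auto simp: chain_indices_def rangeI)
  also have "\<dots> = esum (\<lambda>c. if chain_src c = x \<and> chain_tgt c = y then C.chain_weight c else 0)"
  proof (rule esum_cong)
    fix c :: "nat list"
    have "to_nat c \<in> chain_indices (x,y) \<longleftrightarrow> C.chain_weight c \<noteq> 0 \<and> chain_src c = x \<and> chain_tgt c = y"
      unfolding chain_indices_def by (auto simp: inj_image_mem_iff)
    then show "(if to_nat c \<in> chain_indices (x,y) then ennreal (index_weight (x,y) (to_nat c)) else 0) =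
        (if chain_src c = x \<and> chain_tgt c = y then C.chain_weight c else 0)"
      by (auto simp: index_weight_def ennreal_enn2real_chain_weight)
  qed
  also have "\<dots> = ennreal (plan (x,y))" using xy by (simp add: transport_def[symmetric] plan_def ennreal_enn2real_transport)
  finally show "(index_weight (x,y) has_sum plan (x,y)) (chain_indices (x,y))"
    by (intro has_sum_if_esum) (auto simp: index_weight_def plan_nonneg xy)
qed

lemma Q_has_sum_chain_paths:
  assumes e: "e \<in> E"
  shows "((\<lambda>(p,i). index_weight p i * path_flow (index_path p i) e) has_sum Q e) (SIGMA p:off_diag. chain_indices p)"
proof -
  define F where "F = (\<lambda>pi. if pi \<in> (SIGMA p:off_diag. chain_indices p) then ennreal ((\<lambda>(p,i). index_weight p i * path_flow (index_path p i) e) pi) else 0)"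
  define label where "label c = ((chain_src c, chain_tgt c), to_nat c)" for c :: "nat list"
  have inj: "inj label" unfolding label_def inj_def by auto
  have out: "F pi = 0" if "pi \<notin> range label" for pi
  proof -
    obtain p i where pi: "pi = (p,i)" by (cases pi)
    have "pi \<notin> (SIGMA p:off_diag. chain_indices p)"
    proof
      assume "pi \<in> (SIGMA p:off_diag. chain_indices p)"
      then have "i \<in> chain_indices p" using pi by auto
      then have "chain_src (from_nat i) = fst p" "chain_tgt (from_nat i) = snd p" "i = to_nat (from_nat i :: nat list)"
        using chain_indices_mem[of i p] unfolding chain_indices_def by auto
      then have "pi = label (from_nat i)" using pi by (simp add: label_def)
      then show False using that by auto
    qed
    then show ?thesis by (simp add: F_def)
  qed
  have Fh: "F (label c) = C.chain_weight c * ennreal (path_flow (concat_paths \<gamma> c) e)" for c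
  proof (cases "C.chain_weight c = 0")
    case True
    then have "label c \<notin> (SIGMA p:off_diag. chain_indices p)" by (auto simp: label_def chain_indices_def inj_image_mem_iff)
    then show ?thesis using True by (simp add: F_def)
  next
    case False
    have "label c \<in> (SIGMA p:off_diag. chain_indices p)"
      using concat_paths_good(5,6,7)[OF False] False by (auto simp: label_def chain_indices_def off_diag_def)
    then show ?thesis
      by (simp add: F_def label_def index_weight_def index_path_def ennreal_mult path_flow_nonneg ennreal_enn2real_chain_weight)
  qed
  have "esum F = esum (\<lambda>c. F (label c))" by (rule esum_reindex[symmetric, OF inj out])
  also have "\<dots> = ennreal (Q e)" by (simp add: Fh Q_esum_chains[OF e])
  finally show ?thesis unfolding F_def
    by (intro has_sum_if_esum) (auto simp: index_weight_def path_flow_nonneg Q_nonneg[OF e])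
qed

end

theorem theorem3p9:
  fixes V :: "'v set" and E :: "('v \<times> 'v) set"
    and \<mu>1 \<mu>2 :: "'v \<Rightarrow> real" and Q :: "'v \<times> 'v \<Rightarrow> real"
  assumes "countable V" and "infinite V" and "E \<subseteq> V \<times> V"
    and "prob_fun V \<mu>1" and "prob_fun V \<mu>2"
    and "is_flow E Q" and "finitely_decomposable V E Q" and "acyclic_flow E Q"
    and "\<forall>x\<in>V. divergence E Q x = \<mu>1 x - \<mu>2 x"
  shows "\<exists>\<rho> (I :: 'v \<times> 'v \<Rightarrow> nat set) (\<gamma> :: 'v \<times> 'v \<Rightarrow> nat \<Rightarrow> 'v list)
            (w :: 'v \<times> 'v \<Rightarrow> nat \<Rightarrow> real).
     coupling V \<mu>1 \<mu>2 \<rho> \<and>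
     (\<forall>x\<in>V. \<forall>y\<in>V. x \<noteq> y \<longrightarrow>
        (\<forall>i\<in>I (x,y). dpath V E (\<gamma> (x,y) i) \<and> hd (\<gamma> (x,y) i) = x \<and>
                      last (\<gamma> (x,y) i) = y \<and> w (x,y) i \<ge> 0) \<and>
        (w (x,y) has_sum \<rho> (x,y)) (I (x,y))) \<and>
     (\<forall>e\<in>E. ((\<lambda>(p,i). w p i * path_flow (\<gamma> p i) e) has_sum Q e)
              (SIGMA p:{(x,y). x \<in> V \<and> y \<in> V \<and> x \<noteq> y}. I p)) \<and>
     (\<rho> has_sum ((1/2) * (\<Sum>\<^sub>\<infinity>x\<in>V. \<bar>\<mu>1 x - \<mu>2 x\<bar>)))
        {(x,y). x \<in> V \<and> y \<in> V \<and> x \<noteq> y}"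
proof -
  obtain \<gamma> q where decomposition: "\<forall>n. q n \<ge> 0 \<and> sa_dpath V E (\<gamma> n)" "summable q"
      "\<forall>e\<in>E. (\<lambda>n. q n * path_flow (\<gamma> n) e) sums Q e"
    using assms(7) unfolding finitely_decomposable_def by blast
  interpret flow_decomposition V E \<mu>1 \<mu>2 Q \<gamma> q
    by unfold_locales (use assms decomposition in auto)
  show ?thesis
    using coupling_plan chain_paths Q_has_sum_chain_paths has_sum_plan_off_diag
    unfolding off_diag_def
    by (intro exI[of _ plan] exI[of _ chain_indices] exI[of _ index_path] exI[of _ index_weight]) auto
qed

end
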